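(* Let $\Lambda$ be a row-finite source-free $k$-graph and let $\pi$ be an irreducible representation of $C^*(\Lambda)$ arising from a $\Lambda$-semibranching function system on $(X,\mu)$, where $\mu$ has an atom $y\in X$. Then $\pi$ is purely atomic, and the associated projection-valued measure is supported on the orbit of $\phi(y)$.
   Context: A $k$-graph is a countable small category $\Lambda$ with a functor $d:\Lambda\to\mathbb{N}^k$ with unique factorization; vertices $\Lambda^0$, $r,s$ range/source, $v\Lambda^n$ paths of degree $n$ with range $v$; row-finite/source-free: $v\Lambda^n$ finite/nonempty. $C^*(\Lambda)$ is the universal $C^*$-algebra of a Cuntz–Krieger $\Lambda$-family $\{s_\lambda\}$. $\Lambda^\infty$ is the set of infinite paths (degree-preserving functors $\Omega_k\to\Lambda$), with cylinder sets $Z(\lambda)$, shifts $\sigma^n$, and the orbit of $x$ being $\{\lambda\sigma^n(x):\lambda\in\Lambda,n\in\mathbb{N}^k\}$; a sequence $(\lambda_n)$ with $\lambda_n\in\Lambda^{(n,\ldots,n)}$ and each $\lambda_n$ an initial segment of $\lambda_{n+1}$ determines a unique infinite path. A $\Lambda$-semibranching function system on $(X,\mu)$: sets $D_\lambda$, prefixing maps $\tau_\lambda:D_\lambda\to X$ with ranges $R_\lambda$, coding maps $\tau^m$, such that for each $m$ $\{\tau_\lambda:d(\lambda)=m\}$ is a semibranching function system with coding map $\tau^m$ (ranges a.e. disjoint, a.e. covering, finite positive measures, positive Radon–Nikodym derivatives $\Phi_\lambda=d(\mu\circ\tau_\lambda)/d\mu$, $\tau^m\circ\tau_\lambda=\mathrm{id}$),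 $\tau_v=\mathrm{id}$, $\tau_\lambda\tau_\nu=\tau_{\lambda\nu}$ a.e., $\tau^m\tau^n=\tau^{m+n}$. The arising representation is $\pi(s_\lambda)=S_\lambda$, $S_\lambda\xi(x)=\chi_{R_\lambda}(x)\Phi_\lambda(\tau^{d(\lambda)}(x))^{-1/2}\xi(\tau^{d(\lambda)}(x))$. The map $\phi$: discarding a null set, get $Y\subseteq X$ with $Y=\bigsqcup_v (Y\cap R_v)$, $Y\cap R_\lambda\subseteq Y\cap D_{r(\lambda)}$ and $Y\cap R_v=\bigsqcup_{\lambda\in v\Lambda^n} Y\cap R_\lambda$ for all $v,n$. For $y\in Y$ and each $n$ there is a unique $\lambda_n\in\Lambda^{(n,\ldots,n)}$ with $y\in R_{\lambda_n}$; $\phi(y)$ is the infinite path determined by $(\lambda_n)$. Projection-valued measure of $\pi$: the unique regular projection-valued measure $P$ on the Borel sets of $\Lambda^\infty$ with $P(Z(\lambda))=\pi(s_\lambda s_\lambda^* )$. $\pi$ is purely atomic if there is a Borel $\Omega\subseteq\Lambda^\infty$ with $P(\Lambda^\infty\setminus\Omega)=0$, $P(\{\omega\})\ne0$ for all $\omega\in\Omega$, and $\bigoplus_{\omega\in\Omega}P(\{\omega\})=\mathrm{Id}$ (strong operator topology). *)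

theory Defs
  imports "HOL-Probability.Probability"
begin

text \<open>Elements of N^k are represented as functions nat => nat vanishing from index k on.\<close>

type_synonym deg = "nat \<Rightarrow> nat"

definition NK :: "nat \<Rightarrow> deg set" where
  "NK k = {m. \<forall>i\<ge>k. m i = 0}"

definition dadd :: "deg \<Rightarrow> deg \<Rightarrow> deg" where
  "dadd m n = (\<lambda>i. m i + n i)"

definition dsub :: "deg \<Rightarrow> deg \<Rightarrow> deg" where
  "dsub n m = (\<lambda>i. n i - m i)"

definition dle :: "deg \<Rightarrow> deg \<Rightarrow> bool" where
  "dle m n \<longleftrightarrow> (\<forall>i. m i \<le> n i)"

definition dzero :: deg where
  "dzero = (\<lambda>i. 0)"

definition diag :: "nat \<Rightarrow> nat \<Rightarrow> deg" where
  "diag k n = (\<lambda>i. if i < k then n else 0)"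

text \<open>A small category given by its set of morphisms; objects are identified with
  identity morphisms (vertices). rng/src are range/source, cmp composition
  (cmp l m = l m, defined when src l = rng m), dg the degree functor.\<close>

record 'a kgraph =
  mor :: "'a set"
  rng :: "'a \<Rightarrow> 'a"
  src :: "'a \<Rightarrow> 'a"
  cmp :: "'a \<Rightarrow> 'a \<Rightarrow> 'a"
  dg  :: "'a \<Rightarrow> deg"

definition vertices :: "'a kgraph \<Rightarrow> 'a set" where
  "vertices G = {v \<in> mor G. \<exists>l\<in>mor G. v = rng G l \<or> v = src G l}"

definition k_graph :: "nat \<Rightarrow> 'a kgraph \<Rightarrow> bool" where
  "k_graph k G \<longleftrightarrow>
     countable (mor G) \<and>
     (\<forall>l\<in>mor G. rng G l \<in> mor G \<and> src G l \<in> mor G) \<and>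
     (\<forall>v\<in>vertices G. rng G v = v \<and> src G v = v) \<and>
     (\<forall>l\<in>mor G. \<forall>m\<in>mor G. src G l = rng G m \<longrightarrow>
        cmp G l m \<in> mor G \<and> rng G (cmp G l m) = rng G l \<and> src G (cmp G l m) = src G m) \<and>
     (\<forall>l\<in>mor G. cmp G (rng G l) l = l \<and> cmp G l (src G l) = l) \<and>
     (\<forall>l\<in>mor G. \<forall>m\<in>mor G. \<forall>n\<in>mor G. src G l = rng G m \<and> src G m = rng G n \<longrightarrow>
        cmp G (cmp G l m) n = cmp G l (cmp G m n)) \<and>
     (\<forall>l\<in>mor G. dg G l \<in> NK k) \<and>
     (\<forall>l\<in>mor G. \<forall>m\<in>mor G. src G l = rng G m \<longrightarrow>
        dg G (cmp G l m) = dadd (dg G l) (dg G m)) \<and>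
     (\<forall>l\<in>mor G. \<forall>m\<in>NK k. \<forall>n\<in>NK k. dg G l = dadd m n \<longrightarrow>
        (\<exists>!p. fst p \<in> mor G \<and> snd p \<in> mor G \<and> src G (fst p) = rng G (snd p) \<and>
              dg G (fst p) = m \<and> dg G (snd p) = n \<and> cmp G (fst p) (snd p) = l))"

definition row_finite_source_free :: "nat \<Rightarrow> 'a kgraph \<Rightarrow> bool" where
  "row_finite_source_free k G \<longleftrightarrow>
     (\<forall>v\<in>vertices G. \<forall>n\<in>NK k.
        finite {l\<in>mor G. rng G l = v \<and> dg G l = n} \<and>
        {l\<in>mor G. rng G l = v \<and> dg G l = n} \<noteq> {})"

text \<open>An infinite path is a degree-preserving functor from Omega_k, whose morphisms are
  pairs (m,n) with m <= n in N^k; we write x m n for x(m,n) and make it extensional.\<close>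

definition inf_paths :: "nat \<Rightarrow> 'a kgraph \<Rightarrow> (deg \<Rightarrow> deg \<Rightarrow> 'a) set" where
  "inf_paths k G = {x.
     (\<forall>m n. \<not> (m \<in> NK k \<and> n \<in> NK k \<and> dle m n) \<longrightarrow> x m n = undefined) \<and>
     (\<forall>m\<in>NK k. \<forall>n\<in>NK k. dle m n \<longrightarrow> x m n \<in> mor G \<and> dg G (x m n) = dsub n m) \<and>
     (\<forall>m\<in>NK k. x m m \<in> vertices G) \<and>
     (\<forall>m\<in>NK k. \<forall>n\<in>NK k. \<forall>p\<in>NK k. dle m n \<and> dle n p \<longrightarrow>
        src G (x m n) = rng G (x n p) \<and> cmp G (x m n) (x n p) = x m p)}"

definition shift :: "nat \<Rightarrow> deg \<Rightarrow> (deg \<Rightarrow> deg \<Rightarrow> 'a) \<Rightarrow> (deg \<Rightarrow> deg \<Rightarrow> 'a)" where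
  "shift k n x = (\<lambda>m p. if m \<in> NK k \<and> p \<in> NK k \<and> dle m p
                        then x (dadd m n) (dadd p n) else undefined)"

definition cylinder :: "nat \<Rightarrow> 'a kgraph \<Rightarrow> 'a \<Rightarrow> (deg \<Rightarrow> deg \<Rightarrow> 'a) set" where
  "cylinder k G l = {x \<in> inf_paths k G. x dzero (dg G l) = l}"

text \<open>The Borel sets of the infinite path space: the sigma-algebra generated by the
  cylinder sets (which form a countable base of the topology).\<close>

definition paths_borel :: "nat \<Rightarrow> 'a kgraph \<Rightarrow> (deg \<Rightarrow> deg \<Rightarrow> 'a) set set" where
  "paths_borel k G = sigma_sets (inf_paths k G) (cylinder k G ` mor G)"

text \<open>The orbit of x: all paths l sigma^n(x). The path l y is the unique infinite path z
  with z(0, d l) = l and sigma^{d l}(z) = y.\<close>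

definition orbit :: "nat \<Rightarrow> 'a kgraph \<Rightarrow> (deg \<Rightarrow> deg \<Rightarrow> 'a) \<Rightarrow> (deg \<Rightarrow> deg \<Rightarrow> 'a) set" where
  "orbit k G x = {z \<in> inf_paths k G. \<exists>l\<in>mor G. \<exists>n\<in>NK k.
      z dzero (dg G l) = l \<and> shift k (dg G l) z = shift k n x}"

definition Rg :: "('a \<Rightarrow> 'x set) \<Rightarrow> ('a \<Rightarrow> 'x \<Rightarrow> 'x) \<Rightarrow> 'a \<Rightarrow> 'x set" where
  "Rg D \<tau> l = \<tau> l ` D l"

text \<open>D l: domain of the prefixing map tau l; tc m: coding map tau^m;
  Phi l: Radon-Nikodym derivative d(mu o tau_l)/d mu (on D l).\<close>

definition lambda_sbfs ::
  "nat \<Rightarrow> 'a kgraph \<Rightarrow> 'x measure \<Rightarrow> ('a \<Rightarrow> 'x set) \<Rightarrow> ('a \<Rightarrow> 'x \<Rightarrow> 'x)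
   \<Rightarrow> (deg \<Rightarrow> 'x \<Rightarrow> 'x) \<Rightarrow> ('a \<Rightarrow> 'x \<Rightarrow> real) \<Rightarrow> bool" where
  "lambda_sbfs k G M D \<tau> tc \<Phi> \<longleftrightarrow>
     (\<forall>m\<in>NK k. tc m \<in> M \<rightarrow>\<^sub>M M) \<and>
     (\<forall>l\<in>mor G.
        D l \<in> sets M \<and>
        \<tau> l \<in> restrict_space M (D l) \<rightarrow>\<^sub>M M \<and>
        (\<forall>A\<in>sets M. A \<subseteq> D l \<longrightarrow> \<tau> l ` A \<in> sets M) \<and>
        0 < emeasure M (Rg D \<tau> l) \<and> emeasure M (Rg D \<tau> l) < \<infinity> \<and>
        \<Phi> l \<in> borel_measurable M \<and> (\<forall>x. 0 \<le> \<Phi> l x) \<and>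
        (\<forall>A\<in>sets M. A \<subseteq> D l \<longrightarrow>
           emeasure M (\<tau> l ` A) = (\<integral>\<^sup>+ x\<in>A. ennreal (\<Phi> l x) \<partial>M)) \<and>
        (AE x in M. x \<in> D l \<longrightarrow> 0 < \<Phi> l x) \<and>
        (\<forall>x\<in>D l. tc (dg G l) (\<tau> l x) = x)) \<and>
     (\<forall>m\<in>NK k.
        emeasure M (space M - (\<Union>l\<in>{l\<in>mor G. dg G l = m}. Rg D \<tau> l)) = 0 \<and>
        (\<forall>l\<in>mor G. \<forall>n\<in>mor G. dg G l = m \<and> dg G n = m \<and> l \<noteq> n \<longrightarrow>
           emeasure M (Rg D \<tau> l \<inter> Rg D \<tau> n) = 0)) \<and>
     (\<forall>v\<in>vertices G. \<forall>x\<in>D v. \<tau> v x = x) \<and>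
     (\<forall>l\<in>mor G. \<forall>n\<in>mor G. src G l = rng G n \<longrightarrow>
        (AE x in M. ((x \<in> D n \<and> \<tau> n x \<in> D l) \<longleftrightarrow> x \<in> D (cmp G l n)) \<and>
                    (x \<in> D (cmp G l n) \<longrightarrow> \<tau> l (\<tau> n x) = \<tau> (cmp G l n) x))) \<and>
     (\<forall>m\<in>NK k. \<forall>n\<in>NK k. \<forall>x\<in>space M. tc m (tc n x) = tc (dadd m n) x)"

text \<open>Elements of L^2 are represented by square-integrable measurable complex functions;
  equality in L^2 is a.e. equality (aeq).\<close>

definition L2 :: "'x measure \<Rightarrow> ('x \<Rightarrow> complex) set" where
  "L2 M = {f. f \<in> borel_measurable M \<and> integrable M (\<lambda>x. (cmod (f x))\<^sup>2)}"

definition aeq :: "'x measure \<Rightarrow> ('x \<Rightarrow> complex) \<Rightarrow> ('x \<Rightarrow> complex) \<Rightarrow> bool" where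
  "aeq M f g \<longleftrightarrow> (AE x in M. f x = g x)"

definition ip :: "'x measure \<Rightarrow> ('x \<Rightarrow> complex) \<Rightarrow> ('x \<Rightarrow> complex) \<Rightarrow> complex" where
  "ip M f g = (LINT x|M. f x * cnj (g x))"

definition nrm :: "'x measure \<Rightarrow> ('x \<Rightarrow> complex) \<Rightarrow> real" where
  "nrm M f = sqrt (LINT x|M. (cmod (f x))\<^sup>2)"

definition zero_op :: "'x measure \<Rightarrow> (('x \<Rightarrow> complex) \<Rightarrow> ('x \<Rightarrow> complex)) \<Rightarrow> bool" where
  "zero_op M T \<longleftrightarrow> (\<forall>f\<in>L2 M. aeq M (T f) (\<lambda>_. 0))"

definition adj :: "'x measure \<Rightarrow> (('x \<Rightarrow> complex) \<Rightarrow> ('x \<Rightarrow> complex))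
                   \<Rightarrow> (('x \<Rightarrow> complex) \<Rightarrow> ('x \<Rightarrow> complex))" where
  "adj M T = (SOME T'. (\<forall>f\<in>L2 M. T' f \<in> L2 M) \<and>
                       (\<forall>f\<in>L2 M. \<forall>g\<in>L2 M. ip M (T f) g = ip M f (T' g)))"

definition closed_subspace :: "'x measure \<Rightarrow> ('x \<Rightarrow> complex) set \<Rightarrow> bool" where
  "closed_subspace M V \<longleftrightarrow>
     V \<subseteq> L2 M \<and> (\<lambda>_. 0) \<in> V \<and>
     (\<forall>f\<in>V. \<forall>g\<in>V. (\<lambda>x. f x + g x) \<in> V) \<and>
     (\<forall>c. \<forall>f\<in>V. (\<lambda>x. c * f x) \<in> V) \<and>
     (\<forall>f\<in>V. \<forall>g\<in>L2 M. aeq M f g \<longrightarrow> g \<in> V) \<and>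
     (\<forall>F f. (\<forall>n. F n \<in> V) \<and> f \<in> L2 M \<and>
            (\<lambda>n. nrm M (\<lambda>x. F n x - f x)) \<longlonglongrightarrow> 0 \<longrightarrow> f \<in> V)"

definition orthc :: "'x measure \<Rightarrow> ('x \<Rightarrow> complex) set \<Rightarrow> ('x \<Rightarrow> complex) set" where
  "orthc M V = {g \<in> L2 M. \<forall>f\<in>V. ip M f g = 0}"

text \<open>A representation of C*(Lambda) given by the generators S_l is irreducible iff
  no closed subspace other than 0 and L^2 is invariant under all S_l and S_l^*
  (equivalently, under all S_l, with its orthogonal complement also invariant).\<close>

definition irreducible_ops :: "'x measure \<Rightarrow> (('x \<Rightarrow> complex) \<Rightarrow> ('x \<Rightarrow> complex)) set \<Rightarrow> bool" where
  "irreducible_ops M Ops \<longleftrightarrow>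
     (\<forall>V. closed_subspace M V \<and>
          (\<forall>T\<in>Ops. \<forall>f\<in>V. T f \<in> V) \<and>
          (\<forall>T\<in>Ops. \<forall>g\<in>orthc M V. T g \<in> orthc M V)
        \<longrightarrow> (\<forall>f\<in>V. aeq M f (\<lambda>_. 0)) \<or> L2 M \<subseteq> V)"

definition Sop :: "'a kgraph \<Rightarrow> ('a \<Rightarrow> 'x set) \<Rightarrow> ('a \<Rightarrow> 'x \<Rightarrow> 'x) \<Rightarrow> (deg \<Rightarrow> 'x \<Rightarrow> 'x)
                   \<Rightarrow> ('a \<Rightarrow> 'x \<Rightarrow> real) \<Rightarrow> 'a \<Rightarrow> ('x \<Rightarrow> complex) \<Rightarrow> ('x \<Rightarrow> complex)" where
  "Sop G D \<tau> tc \<Phi> l f = (\<lambda>x. if x \<in> Rg D \<tau> l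
       then complex_of_real (1 / sqrt (\<Phi> l (tc (dg G l) x))) * f (tc (dg G l) x)
       else 0)"

definition is_pvm :: "'x measure \<Rightarrow> 'p set \<Rightarrow> 'p set set
                      \<Rightarrow> ('p set \<Rightarrow> ('x \<Rightarrow> complex) \<Rightarrow> ('x \<Rightarrow> complex)) \<Rightarrow> bool" where
  "is_pvm M S B P \<longleftrightarrow>
     (\<forall>E\<in>B. \<forall>f\<in>L2 M. P E f \<in> L2 M) \<and>
     (\<forall>E\<in>B. \<forall>f\<in>L2 M. aeq M (P E (P E f)) (P E f)) \<and>
     (\<forall>E\<in>B. \<forall>f\<in>L2 M. \<forall>g\<in>L2 M. ip M (P E f) g = ip M f (P E g)) \<and>
     (\<forall>f\<in>L2 M. aeq M (P S f) f) \<and>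
     (\<forall>E\<in>B. \<forall>F\<in>B. \<forall>f\<in>L2 M. aeq M (P (E \<inter> F) f) (P E (P F f))) \<and>
     (\<forall>E::nat \<Rightarrow> 'p set. range E \<subseteq> B \<and> disjoint_family E \<longrightarrow>
        (\<forall>f\<in>L2 M. (\<lambda>n. nrm M (\<lambda>x. P (\<Union>i. E i) f x - (\<Sum>i<n. P (E i) f x))) \<longlonglongrightarrow> 0))"

definition purely_atomic :: "'x measure \<Rightarrow> 'p set \<Rightarrow> 'p set set
                      \<Rightarrow> ('p set \<Rightarrow> ('x \<Rightarrow> complex) \<Rightarrow> ('x \<Rightarrow> complex)) \<Rightarrow> bool" where
  "purely_atomic M S B P \<longleftrightarrow>
     (\<exists>Om. Om \<subseteq> S \<and> Om \<in> B \<and> zero_op M (P (S - Om)) \<and>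
        (\<forall>\<omega>\<in>Om. {\<omega>} \<in> B \<and> \<not> zero_op M (P {\<omega>})) \<and>
        (\<forall>f\<in>L2 M. \<forall>\<epsilon>>0. \<exists>F. finite F \<and> F \<subseteq> Om \<and>
           (\<forall>H. finite H \<and> F \<subseteq> H \<and> H \<subseteq> Om \<longrightarrow>
              nrm M (\<lambda>x. f x - (\<Sum>\<omega>\<in>H. P {\<omega>} f x)) < \<epsilon>)))"

definition phi :: "nat \<Rightarrow> 'a kgraph \<Rightarrow> ('a \<Rightarrow> 'x set) \<Rightarrow> ('a \<Rightarrow> 'x \<Rightarrow> 'x) \<Rightarrow> 'x
                   \<Rightarrow> (deg \<Rightarrow> deg \<Rightarrow> 'a)" where
  "phi k G D \<tau> y = (THE x. x \<in> inf_paths k G \<and>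
                      (\<forall>n. y \<in> Rg D \<tau> (x dzero (diag k n))))"

end

theory Submission
  imports Defs
begin

text \<open>
  An atom y of \<open>\<mu>\<close> generates a countable set O of atoms, closed under all prefixing maps
  \<open>\<tau>\<^sub>\<lambda>\<close> and coding maps \<open>\<tau>\<^sup>m\<close> (these maps send atoms to atoms). The \<open>L\<^sup>2\<close>-functions
  supported on O form a closed subspace invariant under every \<open>S\<^sub>\<lambda>\<close>, whose orthogonal
  complement consists of functions vanishing on O and is invariant as well; by irreducibility,
  O has full measure. At an atom z the projection \<open>S\<^sub>\<lambda>S\<^sub>\<lambda>\<^sup>*\<close> acts as multiplication by
  the indicator of \<open>R\<^sub>\<lambda>\<close>, that is, by \<open>[\<phi>(z) \<in> Z(\<lambda>)]\<close>; the sets E for which P(E) acts at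
  every atom z as multiplication by \<open>[\<phi>(z) \<in> E]\<close> form a \<open>\<sigma>\<close>-algebra, so this holds for all
  Borel sets. Hence P is carried by the countable set \<open>\<phi>(O)\<close>, which lies in the orbit of
  \<open>\<phi>(y)\<close>, every \<open>P({\<phi>(z)})\<close> is nonzero, and the finite sums of the \<open>P({\<omega>})\<close> converge
  strongly to the identity.
\<close>

lemma NK_dzero [simp]: "dzero \<in> NK k" by (simp add: NK_def dzero_def)
lemma NK_dadd [simp]: "m \<in> NK k \<Longrightarrow> n \<in> NK k \<Longrightarrow> dadd m n \<in> NK k" by (simp add: NK_def dadd_def)
lemma NK_dsub [simp]: "m \<in> NK k \<Longrightarrow> dsub m n \<in> NK k" by (simp add: NK_def dsub_def)
lemma NK_diag [simp]: "diag k n \<in> NK k" by (simp add: NK_def diag_def)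
lemma dadd_dzero [simp]: "dadd dzero m = m" "dadd m dzero = m" by (auto simp: dadd_def dzero_def)
lemma dsub_dzero [simp]: "dsub m dzero = m" by (auto simp: dsub_def dzero_def)
lemma dadd_commute: "dadd m n = dadd n m" by (auto simp: dadd_def)
lemma dadd_assoc: "dadd (dadd a b) c = dadd a (dadd b c)" by (auto simp: dadd_def)
lemma dle_refl [simp]: "dle m m" by (simp add: dle_def)
lemma dle_dzero [simp]: "dle dzero m" by (simp add: dle_def dzero_def)
lemma dle_trans: "dle a b \<Longrightarrow> dle b c \<Longrightarrow> dle a c" by (auto simp: dle_def intro: le_trans)
lemma dle_dadd [simp]: "dle m (dadd m n)" "dle m (dadd n m)" by (auto simp: dle_def dadd_def)
lemma dle_dadd_mono: "dle a b \<Longrightarrow> dle (dadd a c) (dadd b c)" by (auto simp: dle_def dadd_def)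
lemma dsub_dadd [simp]: "dsub (dadd m n) m = n" "dsub (dadd n m) m = n" by (auto simp: dsub_def dadd_def)
lemma dadd_dsub: "dle m p \<Longrightarrow> dadd m (dsub p m) = p" by (auto simp: dle_def dsub_def dadd_def fun_eq_iff)
lemma dadd_dsub_dsub: "dle m n \<Longrightarrow> dle n p \<Longrightarrow> dadd (dsub n m) (dsub p n) = dsub p m"
  by (auto simp: dle_def dsub_def dadd_def fun_eq_iff)
lemma dsub_dadd_dadd: "dsub (dadd p n) (dadd m n) = dsub p m" by (auto simp: dadd_def dsub_def)

lemma dle_diag: assumes "m \<in> NK k" shows "\<exists>n. dle m (diag k n)"
proof -
  have "\<forall>i. m i \<le> diag k (Max (m ` {..<k})) i"
    using assms by (auto simp: diag_def NK_def)
  then show ?thesis unfolding dle_def by blast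
qed

lemma countable_NK: "countable (NK k)"
proof (rule countable_image_inj_on)
  show "countable ((\<lambda>m. map m [0..<k]) ` NK k)" by simp
  show "inj_on (\<lambda>m. map m [0..<k]) (NK k)"
    by (auto simp: inj_on_def NK_def fun_eq_iff map_eq_conv)
qed

section \<open>Higher-rank graphs and their infinite paths\<close>

locale higher_rank_graph =
  fixes k :: nat and G :: "'a kgraph"
  assumes k_graph: "k_graph k G"
begin

lemma countable_mor: "countable (mor G)" using k_graph by (simp add: k_graph_def)
lemma rng_mor [simp]: "l \<in> mor G \<Longrightarrow> rng G l \<in> mor G" using k_graph by (simp add: k_graph_def)
lemma src_mor [simp]: "l \<in> mor G \<Longrightarrow> src G l \<in> mor G" using k_graph by (simp add: k_graph_def)
lemma rng_src_vertex: "v \<in> vertices G \<Longrightarrow> rng G v = v \<and> src G v = v" using k_graph by (simp add: k_graph_def)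
lemma cmp_mor [simp]: "l \<in> mor G \<Longrightarrow> m \<in> mor G \<Longrightarrow> src G l = rng G m \<Longrightarrow> cmp G l m \<in> mor G"
  using k_graph by (simp add: k_graph_def)
lemma rng_cmp [simp]:
  "l \<in> mor G \<Longrightarrow> m \<in> mor G \<Longrightarrow> src G l = rng G m \<Longrightarrow> rng G (cmp G l m) = rng G l"
  using k_graph by (simp add: k_graph_def)
lemma src_cmp [simp]:
  "l \<in> mor G \<Longrightarrow> m \<in> mor G \<Longrightarrow> src G l = rng G m \<Longrightarrow> src G (cmp G l m) = src G m"
  using k_graph by (simp add: k_graph_def)
lemma dg_cmp [simp]:
  "l \<in> mor G \<Longrightarrow> m \<in> mor G \<Longrightarrow> src G l = rng G m \<Longrightarrow> dg G (cmp G l m) = dadd (dg G l) (dg G m)"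
  using k_graph by (simp add: k_graph_def)
lemma cmp_rng_left [simp]: "l \<in> mor G \<Longrightarrow> cmp G (rng G l) l = l"
  using k_graph by (simp add: k_graph_def)
lemma cmp_src_right: "l \<in> mor G \<Longrightarrow> cmp G l (src G l) = l"
  using k_graph by (simp add: k_graph_def)
lemma cmp_assoc:
  "l \<in> mor G \<Longrightarrow> m \<in> mor G \<Longrightarrow> n \<in> mor G \<Longrightarrow> src G l = rng G m \<Longrightarrow> src G m = rng G n \<Longrightarrow>
   cmp G (cmp G l m) n = cmp G l (cmp G m n)"
  using k_graph unfolding k_graph_def by blast
lemma dg_NK [simp]: "l \<in> mor G \<Longrightarrow> dg G l \<in> NK k" using k_graph by (simp add: k_graph_def)
lemma rng_vertex [simp]: "l \<in> mor G \<Longrightarrow> rng G l \<in> vertices G" by (auto simp: vertices_def)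
lemma src_vertex [simp]: "l \<in> mor G \<Longrightarrow> src G l \<in> vertices G" by (auto simp: vertices_def)

lemma unique_factorisation:
  "l \<in> mor G \<Longrightarrow> m \<in> NK k \<Longrightarrow> n \<in> NK k \<Longrightarrow> dg G l = dadd m n \<Longrightarrow>
   \<exists>!p. fst p \<in> mor G \<and> snd p \<in> mor G \<and> src G (fst p) = rng G (snd p) \<and>
        dg G (fst p) = m \<and> dg G (snd p) = n \<and> cmp G (fst p) (snd p) = l"
  using k_graph unfolding k_graph_def by blast

lemma factorisation_eq:
  assumes "a \<in> mor G" "b \<in> mor G" "src G a = rng G b" "a' \<in> mor G" "b' \<in> mor G" "src G a' = rng G b'"
    and "dg G a = dg G a'" "dg G b = dg G b'" "cmp G a b = cmp G a' b'"
  shows "a = a' \<and> b = b'"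
proof -
  have "\<exists>!p. fst p \<in> mor G \<and> snd p \<in> mor G \<and> src G (fst p) = rng G (snd p) \<and>
              dg G (fst p) = dg G a \<and> dg G (snd p) = dg G b \<and> cmp G (fst p) (snd p) = cmp G a b"
    using assms by (intro unique_factorisation) auto
  then have "(a, b) = (a', b')" using assms by (metis fst_conv snd_conv)
  then show ?thesis by simp
qed

lemma dg_vertex: assumes "v \<in> vertices G" shows "dg G v = dzero"
proof -
  have v: "v \<in> mor G" "rng G v = v" "src G v = v"
    using assms rng_src_vertex[OF assms] by (simp_all add: vertices_def)
  have "dg G v = dg G (cmp G v v)" using v cmp_rng_left[of v] by simp
  also have "\<dots> = dadd (dg G v) (dg G v)" using v by simp
  finally show ?thesis by (auto simp: dadd_def dzero_def fun_eq_iff)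
qed

lemma dg_dzero_eq_rng: assumes l: "l \<in> mor G" and d: "dg G l = dzero" shows "l = rng G l"
proof -
  have "cmp G l (src G l) = l" using cmp_src_right[OF l] .
  moreover have "src G (rng G l) = rng G l" "rng G (src G l) = src G l"
    using rng_src_vertex l by simp_all
  moreover have "dg G (src G l) = dzero" "dg G (rng G l) = dzero"
    using l dg_vertex by auto
  ultimately have "l = rng G l \<and> src G l = l"
    by (intro factorisation_eq) (use l d in simp_all)
  then show ?thesis ..
qed

abbreviation "S \<equiv> inf_paths k G"
abbreviation "B \<equiv> paths_borel k G"

lemma path_undefined: "x \<in> S \<Longrightarrow> \<not> (m \<in> NK k \<and> n \<in> NK k \<and> dle m n) \<Longrightarrow> x m n = undefined"
  by (simp add: inf_paths_def)
lemma path_mor: "x \<in> S \<Longrightarrow> m \<in> NK k \<Longrightarrow> n \<in> NK k \<Longrightarrow> dle m n \<Longrightarrow> x m n \<in> mor G"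
  by (simp add: inf_paths_def)
lemma path_dg: "x \<in> S \<Longrightarrow> m \<in> NK k \<Longrightarrow> n \<in> NK k \<Longrightarrow> dle m n \<Longrightarrow> dg G (x m n) = dsub n m"
  by (simp add: inf_paths_def)
lemma path_cmp:
  assumes "x \<in> S" "m \<in> NK k" "n \<in> NK k" "p \<in> NK k" "dle m n" "dle n p"
  shows "src G (x m n) = rng G (x n p) \<and> cmp G (x m n) (x n p) = x m p"
proof -
  have "\<forall>m\<in>NK k. \<forall>n\<in>NK k. \<forall>p\<in>NK k. dle m n \<and> dle n p \<longrightarrow>
        src G (x m n) = rng G (x n p) \<and> cmp G (x m n) (x n p) = x m p"
    using assms(1) unfolding inf_paths_def mem_Collect_eq by (elim conjE)
  then show ?thesis using assms by blast
qed
lemma path_vertex: "x \<in> S \<Longrightarrow> m \<in> NK k \<Longrightarrow> x m m \<in> vertices G"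
  by (simp add: inf_paths_def)

lemma shift_eq: "m \<in> NK k \<Longrightarrow> p \<in> NK k \<Longrightarrow> dle m p \<Longrightarrow> shift k n x m p = x (dadd m n) (dadd p n)"
  unfolding shift_def by simp

lemma shift_in_paths: assumes x: "x \<in> S" and n: "n \<in> NK k" shows "shift k n x \<in> S"
proof -
  have "shift k n x m p \<in> mor G \<and> dg G (shift k n x m p) = dsub p m"
    if "m \<in> NK k" "p \<in> NK k" "dle m p" for m p
    using that x n path_mor path_dg dle_dadd_mono by (simp add: shift_eq dsub_dadd_dadd)
  moreover have "shift k n x m m \<in> vertices G" if "m \<in> NK k" for m
    using that x n path_vertex by (simp add: shift_eq)
  moreover have "src G (shift k n x m p) = rng G (shift k n x p q) \<and>
                 cmp G (shift k n x m p) (shift k n x p q) = shift k n x m q"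
    if "m \<in> NK k" "p \<in> NK k" "q \<in> NK k" "dle m p" "dle p q" for m p q
    using that x n path_cmp[of x "dadd m n" "dadd p n" "dadd q n"] dle_dadd_mono dle_trans[of m p q]
    by (simp add: shift_eq)
  moreover have "\<forall>m p. \<not> (m \<in> NK k \<and> p \<in> NK k \<and> dle m p) \<longrightarrow> shift k n x m p = undefined"
    by (simp add: shift_def)
  ultimately show ?thesis unfolding inf_paths_def mem_Collect_eq by (intro conjI; blast)
qed

lemma shift_shift: "a \<in> NK k \<Longrightarrow> shift k a (shift k b x) = shift k (dadd a b) x"
  unfolding shift_def fun_eq_iff by (simp add: dadd_assoc dle_dadd_mono)

lemma path_factor_eq:
  assumes x: "x \<in> S" and w: "w \<in> S" and mnp: "m \<in> NK k" "n \<in> NK k" "p \<in> NK k" "dle m n" "dle n p"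
    and eq: "x m p = w m p"
  shows "x m n = w m n \<and> x n p = w n p"
  using path_cmp[OF x mnp] path_cmp[OF w mnp] eq
  by (intro factorisation_eq) (auto simp: x w mnp path_mor path_dg)

lemma path_eqI:
  assumes x: "x \<in> S" and w: "w \<in> S"
    and cofinal: "\<And>m. m \<in> NK k \<Longrightarrow> \<exists>p\<in>NK k. dle m p \<and> x dzero p = w dzero p"
  shows "x = w"
proof (intro ext)
  fix m p
  show "x m p = w m p"
  proof (cases "m \<in> NK k \<and> p \<in> NK k \<and> dle m p")
    case False then show ?thesis using path_undefined x w by metis
  next
    case True
    then have m: "m \<in> NK k" and p: "p \<in> NK k" and mp: "dle m p" by auto
    obtain q where q: "q \<in> NK k" "dle p q" "x dzero q = w dzero q" using cofinal[OF p] by blast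
    have "x m q = w m q" using path_factor_eq[OF x w NK_dzero m q(1) dle_dzero] q mp dle_trans by blast
    then show ?thesis using path_factor_eq[OF x w m p q(1) mp q(2)] by blast
  qed
qed

lemma sigma_algebra_paths_borel: "sigma_algebra S B"
  unfolding paths_borel_def by (rule sigma_algebra_sigma_sets) (auto simp: cylinder_def)

lemma cylinder_in_paths_borel: "l \<in> mor G \<Longrightarrow> cylinder k G l \<in> B"
  unfolding paths_borel_def by (rule sigma_sets.Basic) auto

sublocale paths: sigma_algebra S B by (rule sigma_algebra_paths_borel)

lemma singleton_in_paths_borel: assumes w: "w \<in> S" shows "{w} \<in> B"
proof -
  have "x = w" if "x \<in> (\<Inter>n. cylinder k G (w dzero (diag k n)))" for x
  proof (rule path_eqI)
    show x: "x \<in> S" using that by (auto simp: cylinder_def)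
    fix m assume "m \<in> NK k"
    then obtain n where "dle m (diag k n)" using dle_diag by blast
    moreover have "x dzero (diag k n) = w dzero (diag k n)"
      using that w by (auto simp: cylinder_def path_dg)
    ultimately show "\<exists>p\<in>NK k. dle m p \<and> x dzero p = w dzero p"
      by (intro bexI[of _ "diag k n"]) auto
  qed (rule w)
  then have "{w} = (\<Inter>n. cylinder k G (w dzero (diag k n)))"
    using w by (auto simp: cylinder_def path_dg)
  moreover have "cylinder k G (w dzero (diag k n)) \<in> B" for n
    using w by (simp add: cylinder_in_paths_borel path_mor)
  ultimately show ?thesis
    by (auto intro: paths.countable_INT)
qed

lemma countable_in_paths_borel: "A \<subseteq> S \<Longrightarrow> countable A \<Longrightarrow> A \<in> B"
  by (rule paths.countable) (auto intro: singleton_in_paths_borel)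

text \<open>Each set \<open>{z. z(0, d \<lambda>) = \<lambda> \<and> \<sigma>\<^bsup>d \<lambda>\<^esup> z = \<sigma>\<^sup>n x}\<close> contains at most the path \<open>\<lambda>\<sigma>\<^sup>n(x)\<close>.\<close>

lemma countable_orbit: "countable (orbit k G x)"
proof -
  let ?T = "\<lambda>l n. {z \<in> S. z dzero (dg G l) = l \<and> shift k (dg G l) z = shift k n x}"
  have sub: "orbit k G x \<subseteq> (\<Union>l\<in>mor G. \<Union>n\<in>NK k. ?T l n)" by (auto simp: orbit_def)
  have unique: "z = z'" if l: "l \<in> mor G" and z: "z \<in> ?T l n" and z': "z' \<in> ?T l n" for l n z z'
  proof (rule path_eqI)
    show "z \<in> S" "z' \<in> S" using z z' by auto
    fix m assume m: "m \<in> NK k"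
    let ?d = "dg G l"
    have d: "?d \<in> NK k" using l by simp
    have decomp: "u dzero (dadd m ?d) = cmp G l (shift k ?d u dzero m)"
      if "u \<in> S" "u dzero ?d = l" for u
      using path_cmp[OF that(1), of dzero ?d "dadd m ?d"] that d m by (simp add: shift_eq)
    have "z dzero (dadd m ?d) = cmp G l (shift k ?d z dzero m)" using decomp z by blast
    also have "\<dots> = cmp G l (shift k ?d z' dzero m)" using z z' by simp
    also have "\<dots> = z' dzero (dadd m ?d)" using decomp[of z'] z' by simp
    finally have "z dzero (dadd m ?d) = z' dzero (dadd m ?d)" .
    then show "\<exists>p\<in>NK k. dle m p \<and> z dzero p = z' dzero p" using m d by (intro bexI[of _ "dadd m ?d"]) auto
  qed
  have "countable (?T l n)" if "l \<in> mor G" for l n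
  proof (cases "?T l n = {}")
    case False
    then obtain z where "z \<in> ?T l n" by blast
    then have "?T l n = {z}" using unique[OF that] by blast
    then show ?thesis by simp
  qed (metis countable_empty)
  then have "countable (\<Union>l\<in>mor G. \<Union>n\<in>NK k. ?T l n)"
    using countable_mor countable_NK by blast
  then show ?thesis using sub countable_subset by blast
qed

lemma orbit_in_paths_borel: "orbit k G x \<in> B"
  by (rule countable_in_paths_borel[OF _ countable_orbit]) (auto simp: orbit_def)

lemma orbit_iff: "z \<in> orbit k G x \<longleftrightarrow> z \<in> S \<and> (\<exists>d\<in>NK k. \<exists>n\<in>NK k. shift k d z = shift k n x)"
proof
  assume "z \<in> S \<and> (\<exists>d\<in>NK k. \<exists>n\<in>NK k. shift k d z = shift k n x)"
  then obtain d n where "z \<in> S" "d \<in> NK k" "n \<in> NK k" "shift k d z = shift k n x" by blast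
  then show "z \<in> orbit k G x"
    unfolding orbit_def by (intro CollectI conjI bexI[of _ "z dzero d"] bexI[of _ n]) (auto simp: path_mor path_dg)
qed (auto simp: orbit_def)

lemma self_in_orbit: "x \<in> S \<Longrightarrow> x \<in> orbit k G x"
  using NK_dzero unfolding orbit_iff by blast

lemma shift_in_orbit: assumes z: "z \<in> orbit k G x" and a: "a \<in> NK k" shows "shift k a z \<in> orbit k G x"
proof -
  obtain d n where dn: "z \<in> S" "d \<in> NK k" "n \<in> NK k" "shift k d z = shift k n x"
    using z by (auto simp: orbit_iff)
  have "shift k d (shift k a z) = shift k a (shift k d z)"
    using dn(2) a by (simp add: shift_shift dadd_commute)
  also have "\<dots> = shift k a (shift k n x)" by (simp only: dn(4))
  also have "\<dots> = shift k (dadd a n) x" using a by (simp add: shift_shift)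
  finally show ?thesis
    using dn a shift_in_paths[OF dn(1) a] NK_dadd[OF a dn(3)] unfolding orbit_iff by blast
qed

lemma in_orbit_if_shift: assumes z: "z \<in> S" and a: "a \<in> NK k" and sz: "shift k a z \<in> orbit k G x"
  shows "z \<in> orbit k G x"
proof -
  obtain d n where dn: "d \<in> NK k" "n \<in> NK k" "shift k d (shift k a z) = shift k n x"
    using sz by (auto simp: orbit_iff)
  then have "shift k (dadd d a) z = shift k n x" by (simp add: shift_shift)
  then show ?thesis using z NK_dadd[OF dn(1) a] dn(2) unfolding orbit_iff by blast
qed

end

section \<open>Atoms of a \<open>\<Lambda>\<close>-semibranching function system\<close>

definition atom :: "'x measure \<Rightarrow> 'x \<Rightarrow> bool" where
  "atom M z \<longleftrightarrow> z \<in> space M \<and> {z} \<in> sets M \<and> 0 < emeasure M {z}"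

lemma AE_atomD: assumes ae: "AE x in M. P x" and z: "atom M z" shows "P z"
proof (rule ccontr)
  assume "\<not> P z"
  from ae obtain N where N: "{x\<in>space M. \<not> P x} \<subseteq> N" "N \<in> sets M" "emeasure M N = 0"
    by (auto elim: AE_E)
  have "{z} \<subseteq> N" using N(1) z \<open>\<not> P z\<close> by (auto simp: atom_def)
  then have "emeasure M {z} \<le> emeasure M N" using N(2) by (rule emeasure_mono)
  then show False using N(3) z by (auto simp: atom_def)
qed

locale lambda_sbfs_system = higher_rank_graph k G
  for k :: nat and G :: "'a kgraph" +
  fixes M :: "'x measure" and D :: "'a \<Rightarrow> 'x set" and \<tau> :: "'a \<Rightarrow> 'x \<Rightarrow> 'x"
    and tc :: "deg \<Rightarrow> 'x \<Rightarrow> 'x" and \<Phi> :: "'a \<Rightarrow> 'x \<Rightarrow> real"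
  assumes sbfs: "lambda_sbfs k G M D \<tau> tc \<Phi>"
begin

abbreviation "R \<equiv> Rg D \<tau>"

lemma coding_measurable: "m \<in> NK k \<Longrightarrow> tc m \<in> M \<rightarrow>\<^sub>M M"
  using sbfs by (simp add: lambda_sbfs_def)
lemma D_sets [measurable]: "l \<in> mor G \<Longrightarrow> D l \<in> sets M"
  using sbfs by (simp add: lambda_sbfs_def)
lemma prefix_measurable: "l \<in> mor G \<Longrightarrow> \<tau> l \<in> restrict_space M (D l) \<rightarrow>\<^sub>M M"
  using sbfs by (simp add: lambda_sbfs_def)
lemma prefix_image_sets: "l \<in> mor G \<Longrightarrow> A \<in> sets M \<Longrightarrow> A \<subseteq> D l \<Longrightarrow> \<tau> l ` A \<in> sets M"
  using sbfs by (simp add: lambda_sbfs_def)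
lemma emeasure_R_pos: "l \<in> mor G \<Longrightarrow> 0 < emeasure M (R l)"
  using sbfs by (simp add: lambda_sbfs_def)
lemma emeasure_R_finite: "l \<in> mor G \<Longrightarrow> emeasure M (R l) < \<infinity>"
  using sbfs by (simp add: lambda_sbfs_def)
lemma Phi_measurable [measurable]: "l \<in> mor G \<Longrightarrow> \<Phi> l \<in> borel_measurable M"
  using sbfs by (simp add: lambda_sbfs_def)
lemma Phi_nonneg: "l \<in> mor G \<Longrightarrow> 0 \<le> \<Phi> l x"
  using sbfs by (simp add: lambda_sbfs_def)
lemma emeasure_prefix_image:
  "l \<in> mor G \<Longrightarrow> A \<in> sets M \<Longrightarrow> A \<subseteq> D l \<Longrightarrow> emeasure M (\<tau> l ` A) = (\<integral>\<^sup>+ x\<in>A. ennreal (\<Phi> l x) \<partial>M)"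
  using sbfs by (simp add: lambda_sbfs_def)
lemma AE_Phi_pos: "l \<in> mor G \<Longrightarrow> AE x in M. x \<in> D l \<longrightarrow> 0 < \<Phi> l x"
  using sbfs by (simp add: lambda_sbfs_def)
lemma coding_prefix: "l \<in> mor G \<Longrightarrow> x \<in> D l \<Longrightarrow> tc (dg G l) (\<tau> l x) = x"
  using sbfs by (simp add: lambda_sbfs_def)
lemma emeasure_uncovered:
  "m \<in> NK k \<Longrightarrow> emeasure M (space M - (\<Union>l\<in>{l\<in>mor G. dg G l = m}. R l)) = 0"
  using sbfs by (simp add: lambda_sbfs_def)
lemma emeasure_R_Int:
  assumes "l \<in> mor G" "n \<in> mor G" "dg G l = dg G n" "l \<noteq> n" shows "emeasure M (R l \<inter> R n) = 0"
proof -
  have "\<forall>m\<in>NK k. \<forall>l\<in>mor G. \<forall>n\<in>mor G. dg G l = m \<and> dg G n = m \<and> l \<noteq> n \<longrightarrow>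
          emeasure M (R l \<inter> R n) = 0"
    using sbfs by (simp add: lambda_sbfs_def)
  then show ?thesis using assms dg_NK by blast
qed
lemma AE_prefix_cmp:
  "l \<in> mor G \<Longrightarrow> n \<in> mor G \<Longrightarrow> src G l = rng G n \<Longrightarrow>
   AE x in M. ((x \<in> D n \<and> \<tau> n x \<in> D l) \<longleftrightarrow> x \<in> D (cmp G l n)) \<and>
              (x \<in> D (cmp G l n) \<longrightarrow> \<tau> l (\<tau> n x) = \<tau> (cmp G l n) x)"
  using sbfs by (simp add: lambda_sbfs_def)

lemma coding_measurable_dg [measurable]: "l \<in> mor G \<Longrightarrow> tc (dg G l) \<in> M \<rightarrow>\<^sub>M M"
  by (rule coding_measurable[OF dg_NK])

lemma R_sets [measurable]: "l \<in> mor G \<Longrightarrow> R l \<in> sets M"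
  unfolding Rg_def by (rule prefix_image_sets) (auto intro: D_sets)

lemma space_nonempty: assumes "l \<in> mor G" obtains c where "c \<in> space M"
  using emeasure_R_pos[OF assms] sets.sets_into_space[OF R_sets[OF assms]] by fastforce

lemma D_subset_space: "l \<in> mor G \<Longrightarrow> D l \<subseteq> space M"
  by (rule sets.sets_into_space[OF D_sets])

lemma prefix_in_space: assumes l: "l \<in> mor G" and x: "x \<in> D l" shows "\<tau> l x \<in> space M"
  using x D_subset_space[OF l] measurable_space[OF prefix_measurable[OF l]]
  by (auto simp: space_restrict_space)

lemma prefix_inj: "l \<in> mor G \<Longrightarrow> x \<in> D l \<Longrightarrow> x' \<in> D l \<Longrightarrow> \<tau> l x = \<tau> l x' \<Longrightarrow> x = x'"
  by (metis coding_prefix)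

lemma R_iff: assumes l: "l \<in> mor G" shows "z \<in> R l \<longleftrightarrow> tc (dg G l) z \<in> D l \<and> \<tau> l (tc (dg G l) z) = z"
proof
  assume "z \<in> R l"
  then obtain w where "w \<in> D l" "z = \<tau> l w" unfolding Rg_def by blast
  then show "tc (dg G l) z \<in> D l \<and> \<tau> l (tc (dg G l) z) = z" using coding_prefix[OF l] by simp
next
  assume "tc (dg G l) z \<in> D l \<and> \<tau> l (tc (dg G l) z) = z"
  then show "z \<in> R l" unfolding Rg_def by (metis image_eqI)
qed

text \<open>The ranges \<open>R\<^sub>\<lambda>\<close> of a fixed degree cover X and overlap only in null sets, which
  cannot contain an atom.\<close>

lemma atom_ex1_R: assumes z: "atom M z" and m: "m \<in> NK k"
  shows "\<exists>!l. l \<in> mor G \<and> dg G l = m \<and> z \<in> R l"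
proof (rule ex_ex1I)
  let ?U = "\<Union>l\<in>{l\<in>mor G. dg G l = m}. R l"
  have "?U \<in> sets M"
    by (rule sets.countable_UN''[OF countable_subset[OF _ countable_mor]]) auto
  then have "emeasure M {z} \<le> emeasure M (space M - ?U)" if "z \<notin> ?U"
    using that z by (intro emeasure_mono) (auto simp: atom_def)
  then show "\<exists>l. l \<in> mor G \<and> dg G l = m \<and> z \<in> R l"
    using emeasure_uncovered[OF m] z by (force simp: atom_def)
next
  fix l n assume l: "l \<in> mor G \<and> dg G l = m \<and> z \<in> R l" and n: "n \<in> mor G \<and> dg G n = m \<and> z \<in> R n"
  have "emeasure M {z} \<le> emeasure M (R l \<inter> R n)"
    using l n by (intro emeasure_mono) auto
  then show "l = n" using emeasure_R_Int[of l n] l n z by (force simp: atom_def)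
qed

lemma emeasure_atom_finite: assumes z: "atom M z" shows "emeasure M {z} < \<infinity>"
proof -
  obtain l where l: "l \<in> mor G" "z \<in> R l" using atom_ex1_R[OF z NK_dzero] by blast
  have "emeasure M {z} \<le> emeasure M (R l)" using l by (intro emeasure_mono) auto
  then show ?thesis using emeasure_R_finite[OF l(1)] by (rule le_less_trans)
qed

lemma measure_atom_pos: "atom M z \<Longrightarrow> 0 < measure M {z}"
  using emeasure_atom_finite[of z] by (auto simp: atom_def measure_def enn2real_positive_iff)

lemma atom_point:
  "atom M z \<Longrightarrow> {z} \<in> sets M \<and> emeasure M {z} < \<infinity> \<and> 0 < measure M {z}"
  using emeasure_atom_finite measure_atom_pos by (simp add: atom_def)

lemma emeasure_prefix_singleton: assumes l: "l \<in> mor G" and x: "x \<in> D l" "{x} \<in> sets M"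
  shows "emeasure M {\<tau> l x} = ennreal (\<Phi> l x) * emeasure M {x}"
  using emeasure_prefix_image[OF l x(2)] x by (simp add: nn_integral_indicator_singleton)

lemma prefix_image_null_sets:
  assumes l: "l \<in> mor G" and N: "N \<in> null_sets M" "N \<subseteq> D l" shows "\<tau> l ` N \<in> null_sets M"
proof -
  have "N \<in> sets M" using N(1) by auto
  then have "emeasure M (\<tau> l ` N) = 0"
    using emeasure_prefix_image[OF l _ N(2)] nn_integral_null_set[OF N(1)] by simp
  then show ?thesis using prefix_image_sets[OF l \<open>N \<in> sets M\<close> N(2)] by auto
qed

lemma atom_prefix: assumes l: "l \<in> mor G" and x: "atom M x" "x \<in> D l" shows "atom M (\<tau> l x)"
proof -
  have "{\<tau> l x} \<in> sets M" using prefix_image_sets[OF l, of "{x}"] x by (auto simp: atom_def)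
  moreover have "0 < \<Phi> l x" using AE_atomD[OF AE_Phi_pos[OF l] x(1)] x(2) by simp
  ultimately show ?thesis
    using x emeasure_prefix_singleton[OF l x(2)] prefix_in_space[OF l x(2)]
    by (simp add: atom_def ennreal_zero_less_mult_iff)
qed

lemma atom_coding: assumes l: "l \<in> mor G" and z: "atom M z" "z \<in> R l"
  shows "atom M (tc (dg G l) z)"
proof -
  let ?w = "tc (dg G l) z"
  have w: "?w \<in> D l" "\<tau> l ?w = z" using R_iff[OF l] z by auto
  have "\<tau> l -` {z} \<inter> space (restrict_space M (D l)) = {?w}"
  proof (intro equalityI subsetI)
    fix v assume "v \<in> \<tau> l -` {z} \<inter> space (restrict_space M (D l))"
    then have "v \<in> D l" "\<tau> l v = \<tau> l ?w" using w by (auto simp: space_restrict_space)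
    then show "v \<in> {?w}" using prefix_inj[OF l _ w(1)] by simp
  qed (use w D_subset_space[OF l] in \<open>auto simp: space_restrict_space\<close>)
  moreover have "\<tau> l -` {z} \<inter> space (restrict_space M (D l)) \<in> sets (restrict_space M (D l))"
    using z by (intro measurable_sets[OF prefix_measurable[OF l]]) (auto simp: atom_def)
  ultimately have ws: "{?w} \<in> sets M" using D_sets[OF l] by (simp add: sets_restrict_space_iff)
  then have "emeasure M {?w} \<noteq> 0"
    using emeasure_prefix_singleton[OF l w(1) ws] w(2) z by (auto simp: atom_def)
  then show ?thesis using ws w D_subset_space[OF l] by (auto simp: atom_def zero_less_iff_neq_zero)
qed

lemma atom_R_cmp:
  assumes a: "a \<in> mor G" and b: "b \<in> mor G" and ab: "src G a = rng G b"
    and z: "atom M z" "z \<in> R (cmp G a b)"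
  shows "\<exists>u. u \<in> D b \<and> \<tau> b u \<in> D a \<and> \<tau> a (\<tau> b u) = z"
proof -
  let ?c = "cmp G a b"
  let ?u = "tc (dg G ?c) z"
  have c: "?c \<in> mor G" using a b ab by simp
  have u: "?u \<in> D ?c" "\<tau> ?c ?u = z" using R_iff[OF c] z(2) by auto
  have "((?u \<in> D b \<and> \<tau> b ?u \<in> D a) \<longleftrightarrow> ?u \<in> D ?c) \<and> (?u \<in> D ?c \<longrightarrow> \<tau> a (\<tau> b ?u) = \<tau> ?c ?u)"
    by (rule AE_atomD[OF AE_prefix_cmp[OF a b ab] atom_coding[OF c z]])
  then have "?u \<in> D b \<and> \<tau> b ?u \<in> D a \<and> \<tau> a (\<tau> b ?u) = z" using u by simp
  then show ?thesis by blast
qed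

lemma atom_R_cmp_left:
  assumes "a \<in> mor G" "b \<in> mor G" "src G a = rng G b" "atom M z" "z \<in> R (cmp G a b)"
  shows "z \<in> R a"
proof -
  obtain u where "\<tau> b u \<in> D a" "\<tau> a (\<tau> b u) = z" using atom_R_cmp[OF assms] by blast
  then show ?thesis unfolding Rg_def by (metis image_eqI)
qed

definition atom_label :: "'x \<Rightarrow> deg \<Rightarrow> 'a" where
  "atom_label z m = (THE l. l \<in> mor G \<and> dg G l = m \<and> z \<in> R l)"

lemma atom_label: "atom M z \<Longrightarrow> m \<in> NK k \<Longrightarrow>
    atom_label z m \<in> mor G \<and> dg G (atom_label z m) = m \<and> z \<in> R (atom_label z m)"
  unfolding atom_label_def by (rule theI'[OF atom_ex1_R])

lemma atom_label_eq: "atom M z \<Longrightarrow> l \<in> mor G \<Longrightarrow> z \<in> R l \<Longrightarrow> atom_label z (dg G l) = l"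
  unfolding atom_label_def by (rule the1_equality[OF atom_ex1_R]) auto

lemma atom_label_factor:
  assumes z: "atom M z" and mp: "m \<in> NK k" "p \<in> NK k" "dle m p"
  shows "\<exists>!b. b \<in> mor G \<and> src G (atom_label z m) = rng G b \<and> dg G b = dsub p m \<and>
              cmp G (atom_label z m) b = atom_label z p"
proof -
  have L: "atom_label z p \<in> mor G" "dg G (atom_label z p) = dadd m (dsub p m)" "z \<in> R (atom_label z p)"
    using atom_label[OF z mp(2)] dadd_dsub[OF mp(3)] by auto
  obtain a b where ab: "a \<in> mor G" "b \<in> mor G" "src G a = rng G b" "dg G a = m" "dg G b = dsub p m"
    "cmp G a b = atom_label z p"
    using unique_factorisation[OF L(1) mp(1) NK_dsub[OF mp(2)] L(2)] by auto
  have "a = atom_label z m"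
    using atom_label_eq[OF z ab(1)] atom_R_cmp_left[OF ab(1-3) z] ab(4,6) L(3) by simp
  then have "\<exists>b. b \<in> mor G \<and> src G (atom_label z m) = rng G b \<and> dg G b = dsub p m \<and>
              cmp G (atom_label z m) b = atom_label z p"
    using ab by blast
  moreover have "b = b'"
    if "b \<in> mor G" "src G (atom_label z m) = rng G b" "dg G b = dsub p m" "cmp G (atom_label z m) b = atom_label z p"
       "b' \<in> mor G" "src G (atom_label z m) = rng G b'" "dg G b' = dsub p m" "cmp G (atom_label z m) b' = atom_label z p"
    for b b'
    using factorisation_eq[of "atom_label z m" b "atom_label z m" b'] that atom_label[OF z mp(1)] by simp
  ultimately show ?thesis by blast
qed

text \<open>The path \<open>\<phi>(z)\<close> of an atom z: its segment from m to p is the second factor of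
  \<open>\<lambda>\<^sub>p = \<lambda>\<^sub>m \<mu>\<close>, where \<open>\<lambda>\<^sub>n\<close> is the label of z at degree n.\<close>

definition atom_path :: "'x \<Rightarrow> deg \<Rightarrow> deg \<Rightarrow> 'a" where
  "atom_path z m p = (if m \<in> NK k \<and> p \<in> NK k \<and> dle m p
     then THE b. b \<in> mor G \<and> src G (atom_label z m) = rng G b \<and> dg G b = dsub p m \<and>
                 cmp G (atom_label z m) b = atom_label z p
     else undefined)"

lemma atom_path_segment:
  assumes z: "atom M z" and mp: "m \<in> NK k" "p \<in> NK k" "dle m p"
  shows "atom_path z m p \<in> mor G \<and> src G (atom_label z m) = rng G (atom_path z m p) \<and>
    dg G (atom_path z m p) = dsub p m \<and> cmp G (atom_label z m) (atom_path z m p) = atom_label z p"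
  unfolding atom_path_def using theI'[OF atom_label_factor[OF z mp]] mp by simp

lemma atom_path_dzero: assumes z: "atom M z" and p: "p \<in> NK k" shows "atom_path z dzero p = atom_label z p"
proof -
  have X: "atom_path z dzero p \<in> mor G" "src G (atom_label z dzero) = rng G (atom_path z dzero p)"
     "cmp G (atom_label z dzero) (atom_path z dzero p) = atom_label z p"
    using atom_path_segment[OF z NK_dzero p dle_dzero] by auto
  have L0: "atom_label z dzero \<in> mor G" "dg G (atom_label z dzero) = dzero"
    using atom_label[OF z NK_dzero] by auto
  have "atom_label z dzero \<in> vertices G"
    using dg_dzero_eq_rng[OF L0] rng_vertex[OF L0(1)] by simp
  then have "atom_label z dzero = rng G (atom_path z dzero p)"
    using X(2) rng_src_vertex by simp
  then show ?thesis using X(3) cmp_rng_left[OF X(1)] by simp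
qed

lemma atom_path_in_paths: assumes z: "atom M z" shows "atom_path z \<in> S"
proof -
  have vertex: "atom_path z m m \<in> vertices G" if m: "m \<in> NK k" for m
  proof -
    have X: "atom_path z m m \<in> mor G" "dg G (atom_path z m m) = dzero"
      using atom_path_segment[OF z m m dle_refl] by (auto simp: dsub_def dzero_def)
    then show ?thesis using dg_dzero_eq_rng[OF X] rng_vertex[OF X(1)] by simp
  qed
  have comp: "src G (atom_path z m n) = rng G (atom_path z n p) \<and>
              cmp G (atom_path z m n) (atom_path z n p) = atom_path z m p"
    if mnp: "m \<in> NK k" "n \<in> NK k" "p \<in> NK k" "dle m n" "dle n p" for m n p
  proof -
    have mp: "dle m p" using dle_trans mnp(4,5) by blast
    note X1 = atom_path_segment[OF z mnp(1,2,4)]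
    note X2 = atom_path_segment[OF z mnp(2,3,5)]
    note X3 = atom_path_segment[OF z mnp(1,3) mp]
    have Lm: "atom_label z m \<in> mor G" using atom_label[OF z mnp(1)] by simp
    have s: "src G (atom_path z m n) = rng G (atom_path z n p)"
      using src_cmp[OF Lm] X1 X2 by metis
    have "cmp G (atom_label z m) (cmp G (atom_path z m n) (atom_path z n p)) = atom_label z p"
      using cmp_assoc[OF Lm _ _ _ s] X1 X2 by simp
    moreover have "dg G (cmp G (atom_path z m n) (atom_path z n p)) = dsub p m"
      using X1 X2 s dadd_dsub_dsub[OF mnp(4,5)] by simp
    moreover have "src G (atom_label z m) = rng G (cmp G (atom_path z m n) (atom_path z n p))"
      using X1 X2 s by simp
    ultimately have "atom_path z m p = cmp G (atom_path z m n) (atom_path z n p)"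
      using factorisation_eq[OF Lm _ _ Lm, of "atom_path z m p"] X1 X2 X3 s by simp
    then show ?thesis using s by simp
  qed
  have "atom_path z m p \<in> mor G \<and> dg G (atom_path z m p) = dsub p m"
    if "m \<in> NK k" "p \<in> NK k" "dle m p" for m p
    using atom_path_segment[OF z that] by simp
  moreover have "\<forall>m p. \<not> (m \<in> NK k \<and> p \<in> NK k \<and> dle m p) \<longrightarrow> atom_path z m p = undefined"
    by (simp add: atom_path_def)
  ultimately show ?thesis
    using vertex comp unfolding inf_paths_def mem_Collect_eq by (intro conjI; blast)
qed

abbreviation "\<phi> \<equiv> phi k G D \<tau>"

lemma atom_path_unique:
  assumes z: "atom M z" and x: "x \<in> S" "\<forall>n. z \<in> R (x dzero (diag k n))"
  shows "x = atom_path z"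
proof (rule path_eqI[OF x(1) atom_path_in_paths[OF z]])
  fix m assume "m \<in> NK k"
  then obtain n where n: "dle m (diag k n)" using dle_diag by blast
  have "atom_label z (diag k n) = x dzero (diag k n)"
    using atom_label_eq[OF z, of "x dzero (diag k n)"] x path_mor path_dg by simp
  then show "\<exists>p\<in>NK k. dle m p \<and> x dzero p = atom_path z dzero p"
    using n atom_path_dzero[OF z NK_diag] by (intro bexI[of _ "diag k n"]) auto
qed

lemma phi_atom: assumes z: "atom M z" shows "\<phi> z = atom_path z"
  unfolding phi_def
proof (rule the_equality)
  show "atom_path z \<in> S \<and> (\<forall>n. z \<in> R (atom_path z dzero (diag k n)))"
    using atom_path_in_paths[OF z] atom_path_dzero[OF z NK_diag] atom_label[OF z NK_diag] by simp
qed (use atom_path_unique[OF z] in blast)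

lemma phi_eqI: "atom M z \<Longrightarrow> x \<in> S \<Longrightarrow> \<forall>n. z \<in> R (x dzero (diag k n)) \<Longrightarrow> \<phi> z = x"
  using atom_path_unique phi_atom by simp

lemma phi_in_paths: "atom M z \<Longrightarrow> \<phi> z \<in> S"
  using phi_atom atom_path_in_paths by simp

lemma phi_dzero: "atom M z \<Longrightarrow> p \<in> NK k \<Longrightarrow> \<phi> z dzero p = atom_label z p"
  using phi_atom atom_path_dzero by simp

lemma phi_in_cylinder_iff: assumes z: "atom M z" and l: "l \<in> mor G"
  shows "\<phi> z \<in> cylinder k G l \<longleftrightarrow> z \<in> R l"
  using phi_dzero[OF z dg_NK[OF l]] atom_label[OF z dg_NK[OF l]] atom_label_eq[OF z l] phi_in_paths[OF z]
  by (auto simp: cylinder_def)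

lemma shift_phi_prefix: assumes l: "l \<in> mor G" and z: "atom M z" "z \<in> D l"
  shows "shift k (dg G l) (\<phi> (\<tau> l z)) = \<phi> z"
proof -
  let ?w = "\<tau> l z" and ?d = "dg G l"
  let ?x = "\<phi> ?w"
  have d: "?d \<in> NK k" using l by simp
  have w: "atom M ?w" using atom_prefix[OF l z] .
  have x: "?x \<in> S" using phi_in_paths[OF w] .
  have "z \<in> R (shift k ?d ?x dzero (diag k n))" for n
  proof -
    let ?q = "dadd (diag k n) ?d"
    let ?\<nu> = "?x ?d ?q"
    have q: "?q \<in> NK k" using d by simp
    have x0d: "?x dzero ?d = l"
      using phi_dzero[OF w d] atom_label_eq[OF w l] z(2) by (simp add: Rg_def)
    have pc: "src G l = rng G ?\<nu> \<and> cmp G l ?\<nu> = ?x dzero ?q"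
      using path_cmp[OF x NK_dzero d q dle_dzero] x0d by simp
    have \<nu>: "?\<nu> \<in> mor G" using path_mor[OF x d q] by simp
    have "?w \<in> R (cmp G l ?\<nu>)" using phi_dzero[OF w q] atom_label[OF w q] pc by simp
    then obtain u where u: "u \<in> D ?\<nu>" "\<tau> ?\<nu> u \<in> D l" "\<tau> l (\<tau> ?\<nu> u) = ?w"
      using atom_R_cmp[OF l \<nu> _ w] pc by auto
    have "\<tau> ?\<nu> u = z" using prefix_inj[OF l u(2) z(2) u(3)] .
    then have "z \<in> R ?\<nu>" using u(1) unfolding Rg_def by (metis image_eqI)
    then show ?thesis by (simp add: shift_eq)
  qed
  then show ?thesis using phi_eqI[OF z(1) shift_in_paths[OF x d]] by simp
qed

definition orbit_step :: "'x set \<Rightarrow> 'x set" where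
  "orbit_step A = A \<union> (\<Union>l\<in>mor G. \<tau> l ` (A \<inter> D l)) \<union> (\<Union>l\<in>mor G. tc (dg G l) ` (A \<inter> R l))"

lemma countable_orbit_step: "countable A \<Longrightarrow> countable (orbit_step A)"
  unfolding orbit_step_def by (auto intro!: countable_UN[OF countable_mor])

lemma atoms_orbit_step: "\<forall>z\<in>A. atom M z \<Longrightarrow> \<forall>z\<in>orbit_step A. atom M z"
  unfolding orbit_step_def using atom_prefix atom_coding by blast

lemma phi_orbit_step:
  assumes A: "\<forall>z\<in>A. atom M z \<and> \<phi> z \<in> orbit k G x"
  shows "\<forall>z\<in>orbit_step A. \<phi> z \<in> orbit k G x"
proof -
  have "\<phi> (\<tau> l w) \<in> orbit k G x" if "l \<in> mor G" "w \<in> A" "w \<in> D l" for l w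
    using in_orbit_if_shift[OF phi_in_paths[OF atom_prefix] dg_NK] shift_phi_prefix A that by simp
  moreover have "\<phi> (tc (dg G l) w) \<in> orbit k G x" if l: "l \<in> mor G" and w: "w \<in> A" "w \<in> R l" for l w
  proof -
    let ?v = "tc (dg G l) w"
    have v: "?v \<in> D l" "\<tau> l ?v = w" "atom M ?v" using R_iff[OF l] atom_coding[OF l] w A by auto
    then show ?thesis using shift_phi_prefix[OF l v(3,1)] shift_in_orbit[OF _ dg_NK[OF l]] A w by metis
  qed
  ultimately show ?thesis using A unfolding orbit_step_def by blast
qed

end

locale atomic_lambda_sbfs = lambda_sbfs_system +
  fixes y
  assumes atom_y: "atom M y"
begin

definition atomic_orbit where
  "atomic_orbit = (\<Union>n. (orbit_step ^^ n) {y})"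

lemma y_in_atomic_orbit: "y \<in> atomic_orbit"
  unfolding atomic_orbit_def by (rule UN_I[of 0]) simp_all

lemma orbit_step_atomic_orbit: "orbit_step atomic_orbit \<subseteq> atomic_orbit"
proof
  fix w assume "w \<in> orbit_step atomic_orbit"
  then obtain n where "w \<in> orbit_step ((orbit_step ^^ n) {y})"
    unfolding orbit_step_def atomic_orbit_def by blast
  then have "w \<in> (orbit_step ^^ Suc n) {y}" by simp
  then show "w \<in> atomic_orbit" unfolding atomic_orbit_def by blast
qed

lemma atomic_orbit_prefix: "z \<in> atomic_orbit \<Longrightarrow> l \<in> mor G \<Longrightarrow> z \<in> D l \<Longrightarrow> \<tau> l z \<in> atomic_orbit"
  using orbit_step_atomic_orbit unfolding orbit_step_def by blast

lemma atomic_orbit_coding: "z \<in> atomic_orbit \<Longrightarrow> l \<in> mor G \<Longrightarrow> z \<in> R l \<Longrightarrow> tc (dg G l) z \<in> atomic_orbit"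
  using orbit_step_atomic_orbit unfolding orbit_step_def by blast

lemma atom_of_atomic_orbit: "z \<in> atomic_orbit \<Longrightarrow> atom M z"
proof -
  have "\<forall>z\<in>(orbit_step ^^ n) {y}. atom M z" for n
    by (induction n) (simp_all add: atom_y atoms_orbit_step)
  then show "z \<in> atomic_orbit \<Longrightarrow> atom M z" unfolding atomic_orbit_def by blast
qed

lemma countable_atomic_orbit: "countable atomic_orbit"
proof -
  have "countable ((orbit_step ^^ n) {y})" for n
    by (induction n) (simp_all add: countable_orbit_step)
  then show ?thesis unfolding atomic_orbit_def by blast
qed

lemma countable_sets_atomic_orbit: "A \<subseteq> atomic_orbit \<Longrightarrow> A \<in> sets M"
  by (rule sets.countable[OF _ countable_subset[OF _ countable_atomic_orbit]])
     (use atom_of_atomic_orbit in \<open>auto simp: atom_def\<close>)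

lemma phi_atomic_orbit: "z \<in> atomic_orbit \<Longrightarrow> \<phi> z \<in> orbit k G (\<phi> y)"
proof -
  have "\<forall>z\<in>(orbit_step ^^ n) {y}. atom M z \<and> \<phi> z \<in> orbit k G (\<phi> y)" for n
  proof (induction n)
    case 0 then show ?case using atom_y self_in_orbit[OF phi_in_paths] by simp
  next
    case (Suc n)
    then have "\<forall>z\<in>orbit_step ((orbit_step ^^ n) {y}). atom M z" by (intro atoms_orbit_step) blast
    moreover have "\<forall>z\<in>orbit_step ((orbit_step ^^ n) {y}). \<phi> z \<in> orbit k G (\<phi> y)"
      using Suc by (intro phi_orbit_step)
    ultimately show ?case by simp
  qed
  then show "z \<in> atomic_orbit \<Longrightarrow> \<phi> z \<in> orbit k G (\<phi> y)" unfolding atomic_orbit_def by blast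
qed

end

lemma cmod_add_squared_le: "(cmod (a + b))\<^sup>2 \<le> 2 * (cmod a)\<^sup>2 + 2 * (cmod b)\<^sup>2"
proof -
  have "(cmod (a + b))\<^sup>2 \<le> (cmod a + cmod b)\<^sup>2" by (simp add: norm_triangle_ineq power_mono)
  also have "\<dots> \<le> 2 * (cmod a)\<^sup>2 + 2 * (cmod b)\<^sup>2"
    using zero_le_power2[of "cmod a - cmod b"] unfolding power2_diff power2_sum by linarith
  finally show ?thesis .
qed

lemma borel_measurable_cnj [measurable]: "f \<in> borel_measurable M \<Longrightarrow> (\<lambda>x. cnj (f x)) \<in> borel_measurable M"
  by (rule borel_measurable_continuous_on[OF continuous_on_cnj[OF continuous_on_id]])

lemma L2_measurable: "f \<in> L2 M \<Longrightarrow> f \<in> borel_measurable M" by (simp add: L2_def)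
lemma L2_integrable: "f \<in> L2 M \<Longrightarrow> integrable M (\<lambda>x. (cmod (f x))\<^sup>2)" by (simp add: L2_def)

lemma L2_add: assumes f: "f \<in> L2 M" and g: "g \<in> L2 M" shows "(\<lambda>x. f x + g x) \<in> L2 M"
proof -
  have [measurable]: "f \<in> borel_measurable M" "g \<in> borel_measurable M" using f g by (auto simp: L2_def)
  have "integrable M (\<lambda>x. (cmod (f x + g x))\<^sup>2)"
  proof (rule Bochner_Integration.integrable_bound)
    show "integrable M (\<lambda>x. 2 * (cmod (f x))\<^sup>2 + 2 * (cmod (g x))\<^sup>2)"
      using L2_integrable[OF f] L2_integrable[OF g] by auto
    show "AE x in M. norm ((cmod (f x + g x))\<^sup>2) \<le> norm (2 * (cmod (f x))\<^sup>2 + 2 * (cmod (g x))\<^sup>2)"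
      using cmod_add_squared_le by (intro AE_I2) (simp add: abs_of_nonneg)
  qed measurable
  then show ?thesis by (simp add: L2_def)
qed

lemma L2_mult: assumes f: "f \<in> L2 M" shows "(\<lambda>x. c * f x) \<in> L2 M"
proof -
  have [measurable]: "f \<in> borel_measurable M" using f by (auto simp: L2_def)
  have "integrable M (\<lambda>x. (cmod c)\<^sup>2 * (cmod (f x))\<^sup>2)" using L2_integrable[OF f] by auto
  then show ?thesis by (simp add: L2_def norm_mult power_mult_distrib)
qed

lemma L2_diff: "f \<in> L2 M \<Longrightarrow> g \<in> L2 M \<Longrightarrow> (\<lambda>x. f x - g x) \<in> L2 M"
  using L2_add[OF _ L2_mult[of g M "-1"], of f] by simp

lemma L2_zero: "(\<lambda>x. 0) \<in> L2 M" by (simp add: L2_def)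

lemma L2_sum: "finite H \<Longrightarrow> (\<And>i. i \<in> H \<Longrightarrow> F i \<in> L2 M) \<Longrightarrow> (\<lambda>x. \<Sum>i\<in>H. F i x) \<in> L2 M"
  by (induction H rule: finite_induct) (simp_all add: L2_zero L2_add)

lemma L2_indicator: assumes A: "A \<in> sets M" and fin: "emeasure M A < \<infinity>"
  shows "(\<lambda>x. complex_of_real (indicator A x)) \<in> L2 M"
proof -
  have "(\<lambda>x. (cmod (complex_of_real (indicator A x)))\<^sup>2) = indicator A"
    by (auto simp: fun_eq_iff split: split_indicator)
  moreover have "integrable M (indicator A :: _ \<Rightarrow> real)" using A fin by simp
  ultimately show ?thesis using A by (simp add: L2_def)
qed

lemma integral_indicator_singleton_scaleR:
  fixes v :: "'b::{banach, second_countable_topology}"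
  assumes a: "{a} \<in> sets M" "emeasure M {a} < \<infinity>"
  shows "(LINT x|M. indicator {a} x *\<^sub>R v) = measure M {a} *\<^sub>R v"
proof -
  have "integrable M (indicator {a} :: _ \<Rightarrow> real)" using a by simp
  then have "(LINT x|M. indicator {a} x *\<^sub>R v) = (LINT x|M. indicator {a} x) *\<^sub>R v"
    by (rule integral_scaleR_left)
  then show ?thesis using sets.sets_into_space[OF a(1)] by (simp add: Int_absorb2)
qed

lemma ip_indicator_singleton: assumes a: "{a} \<in> sets M" "emeasure M {a} < \<infinity>"
  shows "ip M (\<lambda>x. v * complex_of_real (indicator {a} x)) g = measure M {a} *\<^sub>R (v * cnj (g a))"
proof -
  have "(\<lambda>x. (v * complex_of_real (indicator {a} x)) * cnj (g x)) = (\<lambda>x. indicator {a} x *\<^sub>R (v * cnj (g a)))"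
    by (auto simp: fun_eq_iff split: split_indicator)
  then show ?thesis unfolding ip_def using integral_indicator_singleton_scaleR[OF a] by simp
qed

lemma norm_le_nrm_at_point:
  assumes h: "h \<in> L2 M" and z: "{z} \<in> sets M" "emeasure M {z} < \<infinity>" "0 < measure M {z}"
  shows "cmod (h z) \<le> nrm M h / sqrt (measure M {z})"
proof -
  have "(LINT x|M. indicator {z} x *\<^sub>R (cmod (h z))\<^sup>2) \<le> (LINT x|M. (cmod (h x))\<^sup>2)"
    using z L2_integrable[OF h] by (intro integral_mono) (auto split: split_indicator)
  moreover have "(LINT x|M. indicator {z} x *\<^sub>R (cmod (h z))\<^sup>2) = measure M {z} * (cmod (h z))\<^sup>2"
    by (subst integral_indicator_singleton_scaleR[OF z(1,2)]) simp
  ultimately have "measure M {z} * (cmod (h z))\<^sup>2 \<le> (LINT x|M. (cmod (h x))\<^sup>2)" by linarith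
  then have "sqrt (measure M {z} * (cmod (h z))\<^sup>2) \<le> nrm M h"
    unfolding nrm_def by (rule real_sqrt_le_mono)
  then have "sqrt (measure M {z}) * cmod (h z) \<le> nrm M h" by (simp add: real_sqrt_mult)
  then show ?thesis using z(3) by (simp add: field_simps)
qed

lemma tendsto_zero_at_point:
  assumes a: "\<And>n. a n \<in> L2 M" and lim: "(\<lambda>n. nrm M (a n)) \<longlonglongrightarrow> 0"
    and z: "{z} \<in> sets M" "emeasure M {z} < \<infinity>" "0 < measure M {z}"
  shows "(\<lambda>n. a n z) \<longlonglongrightarrow> 0"
proof (rule Lim_null_comparison)
  show "\<forall>\<^sub>F n in sequentially. norm (a n z) \<le> nrm M (a n) / sqrt (measure M {z})"
    using norm_le_nrm_at_point[OF a z] by simp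
  show "(\<lambda>n. nrm M (a n) / sqrt (measure M {z})) \<longlonglongrightarrow> 0"
    using tendsto_divide_zero[OF lim] by simp
qed

section \<open>The operators \<open>S\<^sub>\<lambda>\<close> and their adjoints\<close>

context lambda_sbfs_system
begin

text \<open>The value c taken off \<open>D\<^sub>\<lambda>\<close> is irrelevant: the density below vanishes there.\<close>

definition prefix_ext :: "'a \<Rightarrow> 'x \<Rightarrow> 'x \<Rightarrow> 'x" where
  "prefix_ext l c x = (if x \<in> D l then \<tau> l x else c)"

definition prefix_density :: "'a \<Rightarrow> 'x \<Rightarrow> real" where
  "prefix_density l w = indicator (D l) w * \<Phi> l w"

lemma prefix_ext_measurable [measurable]:
  assumes l: "l \<in> mor G" and c: "c \<in> space M" shows "prefix_ext l c \<in> M \<rightarrow>\<^sub>M M"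
  unfolding prefix_ext_def
proof (subst measurable_If_restrict_space_iff)
  show "{x \<in> space M. x \<in> D l} \<in> sets M" using D_sets[OF l] D_subset_space[OF l] by (simp add: Int_absorb1)
  show "\<tau> l \<in> restrict_space M {x. x \<in> D l} \<rightarrow>\<^sub>M M \<and> (\<lambda>x. c) \<in> restrict_space M {x. x \<notin> D l} \<rightarrow>\<^sub>M M"
    using prefix_measurable[OF l] c by simp
qed

lemma prefix_density_measurable [measurable]: "l \<in> mor G \<Longrightarrow> prefix_density l \<in> borel_measurable M"
  unfolding prefix_density_def by measurable

lemma prefix_density_nonneg: "l \<in> mor G \<Longrightarrow> 0 \<le> prefix_density l w"
  unfolding prefix_density_def using Phi_nonneg by simp

lemma distr_prefix_density:
  assumes l: "l \<in> mor G" and c: "c \<in> space M"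
  shows "distr (density M (\<lambda>w. ennreal (prefix_density l w))) M (prefix_ext l c) =
         density M (\<lambda>x. ennreal (indicator (R l) x))"
proof (rule measure_eqI)
  fix A assume "A \<in> sets (distr (density M (\<lambda>w. ennreal (prefix_density l w))) M (prefix_ext l c))"
  then have A: "A \<in> sets M" by simp
  let ?B = "{w \<in> D l. \<tau> l w \<in> A}"
  have "?B = \<tau> l -` A \<inter> space (restrict_space M (D l))"
    using D_subset_space[OF l] by (auto simp: space_restrict_space)
  then have B: "?B \<in> sets M"
    using measurable_sets[OF prefix_measurable[OF l] A] D_sets[OF l] by (simp add: sets_restrict_space_iff)
  have "emeasure (distr (density M (\<lambda>w. ennreal (prefix_density l w))) M (prefix_ext l c)) A
      = (\<integral>\<^sup>+ w. ennreal (prefix_density l w) * indicator (prefix_ext l c -` A \<inter> space M) w \<partial>M)"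
    using A l c by (simp add: emeasure_distr emeasure_density)
  also have "\<dots> = (\<integral>\<^sup>+ w. ennreal (\<Phi> l w) * indicator ?B w \<partial>M)"
    by (intro nn_integral_cong) (auto simp: prefix_density_def prefix_ext_def split: split_indicator)
  also have "\<dots> = emeasure M (\<tau> l ` ?B)"
    using emeasure_prefix_image[OF l B] by (simp add: mult.commute)
  also have "\<tau> l ` ?B = R l \<inter> A" unfolding Rg_def by auto
  also have "emeasure M (R l \<inter> A) = (\<integral>\<^sup>+ x. ennreal (indicator (R l) x) * indicator A x \<partial>M)"
  proof -
    have "(\<integral>\<^sup>+ x. ennreal (indicator (R l) x) * indicator A x \<partial>M) = (\<integral>\<^sup>+ x. indicator (R l \<inter> A) x \<partial>M)"
      by (intro nn_integral_cong) (auto split: split_indicator)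
    then show ?thesis using A l by simp
  qed
  also have "\<dots> = emeasure (density M (\<lambda>x. ennreal (indicator (R l) x))) A"
    using A l by (intro emeasure_density[symmetric]) auto
  finally show "emeasure (distr (density M (\<lambda>w. ennreal (prefix_density l w))) M (prefix_ext l c)) A
      = emeasure (density M (\<lambda>x. ennreal (indicator (R l) x))) A" .
qed simp

lemma integral_R_change_vars:
  fixes h :: "'x \<Rightarrow> 'b::{banach, second_countable_topology}"
  assumes l: "l \<in> mor G" and c: "c \<in> space M" and h[measurable]: "h \<in> borel_measurable M"
  shows "(LINT x|M. indicator (R l) x *\<^sub>R h x) = (LINT w|M. prefix_density l w *\<^sub>R h (prefix_ext l c w))"
proof -
  have "(LINT x|M. indicator (R l) x *\<^sub>R h x) = integral\<^sup>L (density M (\<lambda>x. ennreal (indicator (R l) x))) h"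
    using l by (intro integral_density[symmetric]) auto
  also have "\<dots> = integral\<^sup>L (distr (density M (\<lambda>w. ennreal (prefix_density l w))) M (prefix_ext l c)) h"
    using distr_prefix_density[OF l c] by simp
  also have "\<dots> = integral\<^sup>L (density M (\<lambda>w. ennreal (prefix_density l w))) (\<lambda>w. h (prefix_ext l c w))"
    using l c by (intro integral_distr) simp_all
  also have "\<dots> = (LINT w|M. prefix_density l w *\<^sub>R h (prefix_ext l c w))"
    using l c prefix_density_nonneg[OF l] by (intro integral_density) auto
  finally show ?thesis .
qed

lemma integrable_R_change_vars:
  fixes h :: "'x \<Rightarrow> 'b::{banach, second_countable_topology}"
  assumes l: "l \<in> mor G" and c: "c \<in> space M" and h[measurable]: "h \<in> borel_measurable M"
  shows "integrable M (\<lambda>x. indicator (R l) x *\<^sub>R h x) \<longleftrightarrow>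
         integrable M (\<lambda>w. prefix_density l w *\<^sub>R h (prefix_ext l c w))"
proof -
  have "integrable M (\<lambda>x. indicator (R l) x *\<^sub>R h x) \<longleftrightarrow>
        integrable (density M (\<lambda>x. ennreal (indicator (R l) x))) h"
    using l by (intro integrable_density[symmetric]) auto
  also have "\<dots> \<longleftrightarrow> integrable (distr (density M (\<lambda>w. ennreal (prefix_density l w))) M (prefix_ext l c)) h"
    using distr_prefix_density[OF l c] by simp
  also have "\<dots> \<longleftrightarrow> integrable (density M (\<lambda>w. ennreal (prefix_density l w))) (\<lambda>w. h (prefix_ext l c w))"
    using l c by (intro integrable_distr_eq) simp_all
  also have "\<dots> \<longleftrightarrow> integrable M (\<lambda>w. prefix_density l w *\<^sub>R h (prefix_ext l c w))"
    using l c prefix_density_nonneg[OF l] by (intro integrable_density) auto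
  finally show ?thesis .
qed


abbreviation "Sl \<equiv> Sop G D \<tau> tc \<Phi>"

lemma Sop_eq_indicator:
  "Sl l f = (\<lambda>x. indicator (R l) x *\<^sub>R (complex_of_real (1 / sqrt (\<Phi> l (tc (dg G l) x))) * f (tc (dg G l) x)))"
  unfolding Sop_def by (auto simp: fun_eq_iff split: split_indicator)

lemma Sop_L2: assumes l: "l \<in> mor G" and f: "f \<in> L2 M" shows "Sl l f \<in> L2 M"
proof -
  obtain c where c: "c \<in> space M" using space_nonempty[OF l] .
  have [measurable]: "f \<in> borel_measurable M" using L2_measurable[OF f] .
  let ?h = "\<lambda>x. (cmod (f (tc (dg G l) x)))\<^sup>2 / \<Phi> l (tc (dg G l) x)"
  have hm[measurable]: "?h \<in> borel_measurable M" using l by measurable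
  have "AE w in M. indicator (D l) w *\<^sub>R (cmod (f w))\<^sup>2 = prefix_density l w *\<^sub>R ?h (prefix_ext l c w)"
    using AE_Phi_pos[OF l]
  proof eventually_elim
    fix w assume "w \<in> D l \<longrightarrow> 0 < \<Phi> l w"
    then show "indicator (D l) w *\<^sub>R (cmod (f w))\<^sup>2 = prefix_density l w *\<^sub>R ?h (prefix_ext l c w)"
      by (cases "w \<in> D l") (simp_all add: prefix_density_def prefix_ext_def coding_prefix[OF l])
  qed
  moreover have "integrable M (\<lambda>w. indicator (D l) w *\<^sub>R (cmod (f w))\<^sup>2)"
    using integrable_mult_indicator[OF D_sets[OF l] L2_integrable[OF f]] .
  moreover have [measurable]: "prefix_ext l c \<in> M \<rightarrow>\<^sub>M M" using l c by measurable
  have "(\<lambda>w. prefix_density l w *\<^sub>R ?h (prefix_ext l c w)) \<in> borel_measurable M" using l by measurable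
  ultimately have "integrable M (\<lambda>w. prefix_density l w *\<^sub>R ?h (prefix_ext l c w))"
    by (rule integrable_cong_AE_imp[rotated 2])
  then have "integrable M (\<lambda>x. indicator (R l) x *\<^sub>R ?h x)"
    using integrable_R_change_vars[OF l c hm] by simp
  moreover have "(\<lambda>x. (cmod (Sl l f x))\<^sup>2) = (\<lambda>x. indicator (R l) x *\<^sub>R ?h x)"
  proof
    fix x
    have "0 \<le> \<Phi> l (tc (dg G l) x)" using Phi_nonneg[OF l] .
    then show "(cmod (Sl l f x))\<^sup>2 = indicator (R l) x *\<^sub>R ?h x"
      unfolding Sop_eq_indicator
      by (auto simp: norm_mult norm_divide power_mult_distrib power_divide split: split_indicator)
  qed
  moreover have "Sl l f \<in> borel_measurable M" unfolding Sop_eq_indicator using l by measurable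
  ultimately show ?thesis by (simp add: L2_def)
qed

definition Sop_adjoint :: "'a \<Rightarrow> 'x \<Rightarrow> ('x \<Rightarrow> complex) \<Rightarrow> 'x \<Rightarrow> complex" where
  "Sop_adjoint l c g = (\<lambda>w. complex_of_real (indicator (D l) w * sqrt (\<Phi> l w)) * g (prefix_ext l c w))"

lemma Sop_adjoint_L2: assumes l: "l \<in> mor G" and c: "c \<in> space M" and g: "g \<in> L2 M"
  shows "Sop_adjoint l c g \<in> L2 M"
proof -
  have [measurable]: "g \<in> borel_measurable M" using L2_measurable[OF g] .
  have "integrable M (\<lambda>x. indicator (R l) x *\<^sub>R (cmod (g x))\<^sup>2)"
    using integrable_mult_indicator[OF R_sets[OF l] L2_integrable[OF g]] .
  moreover have "(\<lambda>x. (cmod (g x))\<^sup>2) \<in> borel_measurable M" by measurable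
  ultimately have "integrable M (\<lambda>w. prefix_density l w *\<^sub>R (cmod (g (prefix_ext l c w)))\<^sup>2)"
    using integrable_R_change_vars[OF l c] by blast
  moreover have "(\<lambda>w. prefix_density l w *\<^sub>R (cmod (g (prefix_ext l c w)))\<^sup>2) =
                 (\<lambda>w. (cmod (Sop_adjoint l c g w))\<^sup>2)"
    using Phi_nonneg[OF l]
    by (auto simp: Sop_adjoint_def prefix_density_def norm_mult power_mult_distrib split: split_indicator)
  moreover have "Sop_adjoint l c g \<in> borel_measurable M" unfolding Sop_adjoint_def using l c by measurable
  ultimately show ?thesis by (simp add: L2_def)
qed

lemma ip_Sop: assumes l: "l \<in> mor G" and c: "c \<in> space M" and f: "f \<in> L2 M" and g: "g \<in> L2 M"
  shows "ip M (Sl l f) g = ip M f (Sop_adjoint l c g)"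
proof -
  have [measurable]: "f \<in> borel_measurable M" "g \<in> borel_measurable M"
    using L2_measurable[OF f] L2_measurable[OF g] .
  let ?h = "\<lambda>x. complex_of_real (1 / sqrt (\<Phi> l (tc (dg G l) x))) * f (tc (dg G l) x) * cnj (g x)"
  have "?h \<in> borel_measurable M" using l by measurable
  have "ip M (Sl l f) g = (LINT x|M. indicator (R l) x *\<^sub>R ?h x)"
    unfolding ip_def Sop_eq_indicator by (intro Bochner_Integration.integral_cong) auto
  also have "\<dots> = (LINT w|M. prefix_density l w *\<^sub>R ?h (prefix_ext l c w))"
    by (rule integral_R_change_vars[OF l c \<open>?h \<in> borel_measurable M\<close>])
  also have "\<dots> = (LINT w|M. f w * cnj (Sop_adjoint l c g w))"
  proof (intro Bochner_Integration.integral_cong refl)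
    fix w
    show "prefix_density l w *\<^sub>R ?h (prefix_ext l c w) = f w * cnj (Sop_adjoint l c g w)"
    proof (cases "w \<in> D l")
      case True
      have "\<Phi> l w * (1 / sqrt (\<Phi> l w)) = sqrt (\<Phi> l w)"
        using real_div_sqrt[OF Phi_nonneg[OF l]] by simp
      moreover have "prefix_density l w *\<^sub>R ?h (prefix_ext l c w) =
          complex_of_real (\<Phi> l w * (1 / sqrt (\<Phi> l w))) * f w * cnj (g (\<tau> l w))"
        using True coding_prefix[OF l True] by (simp add: prefix_density_def prefix_ext_def scaleR_conv_of_real)
      ultimately show ?thesis using True by (simp add: Sop_adjoint_def prefix_ext_def)
    qed (simp add: prefix_density_def Sop_adjoint_def)
  qed
  finally show ?thesis unfolding ip_def .
qed

lemma adj_Sop: assumes l: "l \<in> mor G"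
  shows "(\<forall>f\<in>L2 M. adj M (Sl l) f \<in> L2 M) \<and>
         (\<forall>f\<in>L2 M. \<forall>g\<in>L2 M. ip M (Sl l f) g = ip M f (adj M (Sl l) g))"
proof -
  obtain c where c: "c \<in> space M" using space_nonempty[OF l] .
  have "\<exists>T. (\<forall>f\<in>L2 M. T f \<in> L2 M) \<and> (\<forall>f\<in>L2 M. \<forall>g\<in>L2 M. ip M (Sl l f) g = ip M f (T g))"
    using Sop_adjoint_L2[OF l c] ip_Sop[OF l c] by blast
  from someI_ex[OF this] show ?thesis unfolding adj_def .
qed

lemma Sop_indicator_singleton: assumes l: "l \<in> mor G" and w: "w \<in> D l"
  shows "Sl l (\<lambda>x. complex_of_real (indicator {w} x)) =
    (\<lambda>x. complex_of_real (1 / sqrt (\<Phi> l w)) * complex_of_real (indicator {\<tau> l w} x))"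
proof
  fix x
  have "x \<in> R l \<and> tc (dg G l) x = w \<longleftrightarrow> x = \<tau> l w"
  proof
    assume "x \<in> R l \<and> tc (dg G l) x = w"
    then show "x = \<tau> l w" using R_iff[OF l, of x] by auto
  next
    assume "x = \<tau> l w"
    then show "x \<in> R l \<and> tc (dg G l) x = w" using coding_prefix[OF l w] w by (auto simp: Rg_def)
  qed
  then show "Sl l (\<lambda>x. complex_of_real (indicator {w} x)) x =
    complex_of_real (1 / sqrt (\<Phi> l w)) * complex_of_real (indicator {\<tau> l w} x)"
    by (auto simp: Sop_def split: split_indicator)
qed

text \<open>\<open>adj\<close> is determined only almost everywhere, but an atom has positive measure: pair with
  its indicator.\<close>

lemma adj_Sop_at_atom: assumes l: "l \<in> mor G" and w: "atom M w" "w \<in> D l" and g: "g \<in> L2 M"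
  shows "adj M (Sl l) g w = complex_of_real (sqrt (\<Phi> l w)) * g (\<tau> l w)"
proof -
  let ?T = "adj M (Sl l)" and ?m = "measure M {w}" and ?p = "\<Phi> l w"
  let ?iw = "\<lambda>x. complex_of_real (indicator {w} x)"
  have ws: "{w} \<in> sets M" "emeasure M {w} < \<infinity>" "0 < ?m" using atom_point[OF w(1)] by auto
  have tws: "{\<tau> l w} \<in> sets M" "emeasure M {\<tau> l w} < \<infinity>" using atom_point[OF atom_prefix[OF l w]] by auto
  have p: "0 < ?p" using AE_atomD[OF AE_Phi_pos[OF l] w(1)] w(2) by simp
  have "measure M {\<tau> l w} = ?p * ?m"
    using emeasure_prefix_singleton[OF l w(2) ws(1)] Phi_nonneg[OF l] by (simp add: measure_def enn2real_mult)
  then have "ip M (Sl l ?iw) g = complex_of_real ?m * (complex_of_real (?p * (1 / sqrt ?p)) * cnj (g (\<tau> l w)))"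
    unfolding Sop_indicator_singleton[OF l w(2)] ip_indicator_singleton[OF tws]
    by (simp add: scaleR_conv_of_real algebra_simps)
  also have "?p * (1 / sqrt ?p) = sqrt ?p" using real_div_sqrt[of ?p] p by simp
  finally have L: "ip M (Sl l ?iw) g = complex_of_real ?m * (complex_of_real (sqrt ?p) * cnj (g (\<tau> l w)))" .
  have "ip M ?iw (?T g) = complex_of_real ?m * cnj (?T g w)"
    using ip_indicator_singleton[OF ws(1,2), of 1 "?T g"] by (simp add: scaleR_conv_of_real)
  then have "complex_of_real ?m * cnj (?T g w) = complex_of_real ?m * (complex_of_real (sqrt ?p) * cnj (g (\<tau> l w)))"
    using adj_Sop[OF l] L2_indicator[OF ws(1,2)] g L by simp
  then have "cnj (?T g w) = complex_of_real (sqrt ?p) * cnj (g (\<tau> l w))" using ws(3) by simp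
  then have "cnj (cnj (?T g w)) = cnj (complex_of_real (sqrt ?p) * cnj (g (\<tau> l w)))" by (rule arg_cong)
  then show ?thesis by simp
qed

lemma Sop_adj_at_atom: assumes l: "l \<in> mor G" and f: "f \<in> L2 M" and z: "atom M z"
  shows "Sl l (adj M (Sl l) f) z = (if z \<in> R l then f z else 0)"
proof (cases "z \<in> R l")
  case True
  let ?w = "tc (dg G l) z"
  have w: "?w \<in> D l" "\<tau> l ?w = z" "atom M ?w"
    using R_iff[OF l, THEN iffD1, OF True] atom_coding[OF l z True] by auto
  have p: "0 < \<Phi> l ?w" using AE_atomD[OF AE_Phi_pos[OF l] w(3)] w(1) by simp
  have "Sl l (adj M (Sl l) f) z = complex_of_real (1 / sqrt (\<Phi> l ?w)) * adj M (Sl l) f ?w"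
    using True by (simp add: Sop_def)
  also have "\<dots> = complex_of_real (1 / sqrt (\<Phi> l ?w) * sqrt (\<Phi> l ?w)) * f z"
    using adj_Sop_at_atom[OF l w(3) w(1) f] w(2) by simp
  also have "\<dots> = f z" using p by simp
  finally show ?thesis using True by simp
qed (simp add: Sop_def)

end

section \<open>The projection-valued measure at atoms\<close>

locale sbfs_pvm = lambda_sbfs_system +
  fixes P
  assumes pvm: "is_pvm M S B P"
    and projection_cylinder: "\<forall>l\<in>mor G. \<forall>f\<in>L2 M. aeq M (P (cylinder k G l) f) (Sl l (adj M (Sl l) f))"
begin

lemma projection_L2: "E \<in> B \<Longrightarrow> f \<in> L2 M \<Longrightarrow> P E f \<in> L2 M"
  using pvm by (simp add: is_pvm_def)
lemma projection_space: "f \<in> L2 M \<Longrightarrow> aeq M (P S f) f"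
  using pvm by (simp add: is_pvm_def)
lemma projection_Int: "E \<in> B \<Longrightarrow> F \<in> B \<Longrightarrow> f \<in> L2 M \<Longrightarrow> aeq M (P (E \<inter> F) f) (P E (P F f))"
  using pvm by (simp add: is_pvm_def)
lemma projection_countably_additive:
  "range E \<subseteq> B \<Longrightarrow> disjoint_family E \<Longrightarrow> f \<in> L2 M \<Longrightarrow>
   (\<lambda>n. nrm M (\<lambda>x. P (\<Union>i. E i) f x - (\<Sum>i<n. P (E i) f x))) \<longlonglongrightarrow> 0"
  using pvm unfolding is_pvm_def by blast

lemma projection_sums_at_atom:
  assumes E: "range E \<subseteq> B" "disjoint_family E" and f: "f \<in> L2 M" and z: "atom M z"
  shows "(\<lambda>n. \<Sum>i<n. P (E i) f z) \<longlonglongrightarrow> P (\<Union>i. E i) f z"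
proof -
  have UB: "(\<Union>i. E i) \<in> B" using E(1) paths.countable_UN by blast
  let ?a = "\<lambda>n x. P (\<Union>i. E i) f x - (\<Sum>i<n. P (E i) f x)"
  have a: "?a n \<in> L2 M" for n
    using E(1) f by (intro L2_diff projection_L2[OF UB f] L2_sum) (auto intro: projection_L2)
  have "(\<lambda>n. ?a n z) \<longlonglongrightarrow> 0"
    using tendsto_zero_at_point[OF a projection_countably_additive[OF E f]] atom_point[OF z] by blast
  then have "(\<lambda>n. P (\<Union>i. E i) f z - ?a n z) \<longlonglongrightarrow> P (\<Union>i. E i) f z - 0"
    by (intro tendsto_diff tendsto_const)
  then show ?thesis by simp
qed

lemma projection_empty_at_atom: assumes f: "f \<in> L2 M" and z: "atom M z" shows "P {} f z = 0"
proof -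
  have "{} \<in> B" using paths.empty_sets .
  then have "(\<lambda>n. \<Sum>i<n. P {} f z) \<longlonglongrightarrow> P {} f z"
    using projection_sums_at_atom[of "\<lambda>_. {}", OF _ _ f z] by (simp add: disjoint_family_on_def)
  then have L: "(\<lambda>n. of_nat n * P {} f z) \<longlonglongrightarrow> P {} f z" by simp
  then have "(\<lambda>n. of_nat (Suc n) * P {} f z) \<longlonglongrightarrow> P {} f z" by (rule LIMSEQ_Suc)
  from tendsto_diff[OF this L] show ?thesis by (simp add: algebra_simps LIMSEQ_const_iff)
qed

definition acts_at_atoms where
  "acts_at_atoms E \<longleftrightarrow> E \<in> B \<and>
     (\<forall>f\<in>L2 M. \<forall>z. atom M z \<longrightarrow> P E f z = (if \<phi> z \<in> E then f z else 0))"

lemma acts_at_atoms_empty: "acts_at_atoms {}"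
  using projection_empty_at_atom paths.empty_sets
  by (simp add: acts_at_atoms_def)

lemma acts_at_atoms_Compl: assumes A: "acts_at_atoms A" shows "acts_at_atoms (S - A)"
proof -
  have AB: "A \<in> B" using A by (simp add: acts_at_atoms_def)
  have SAB: "S - A \<in> B" using AB paths.compl_sets by blast
  let ?E = "\<lambda>i::nat. if i = 0 then A else if i = 1 then S - A else {}"
  have E: "range ?E \<subseteq> B" "disjoint_family ?E"
    using AB SAB paths.empty_sets by (auto simp: disjoint_family_on_def)
  have U: "(\<Union>i. ?E i) = S" using paths.sets_into_space[OF AB] by (auto split: if_splits)
  have "P (S - A) f z = (if \<phi> z \<in> S - A then f z else 0)" if f: "f \<in> L2 M" and z: "atom M z" for f z
  proof -
    have sum: "(\<Sum>i<n + 2. P (?E i) f z) = P A f z + P (S - A) f z" for n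
      by (induction n) (simp_all add: numeral_2_eq_2 projection_empty_at_atom[OF f z])
    have "(\<lambda>n. \<Sum>i<n. P (?E i) f z) \<longlonglongrightarrow> P S f z"
      using projection_sums_at_atom[OF E f z] U by simp
    from LIMSEQ_ignore_initial_segment[OF this, of 2]
    have "(\<lambda>n. \<Sum>i<n + 2. P (?E i) f z) \<longlonglongrightarrow> P S f z" .
    then have "P S f z = P A f z + P (S - A) f z" unfolding sum by (simp add: LIMSEQ_const_iff)
    moreover have "P S f z = f z" using AE_atomD[OF projection_space[OF f, unfolded aeq_def] z] .
    ultimately show ?thesis using A f z phi_in_paths[OF z] by (auto simp: acts_at_atoms_def)
  qed
  then show ?thesis using SAB by (simp add: acts_at_atoms_def)
qed

lemma acts_at_atoms_Int:
  assumes A: "acts_at_atoms A" and C: "acts_at_atoms C" shows "acts_at_atoms (A \<inter> C)"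
proof -
  have AB: "A \<in> B" and CB: "C \<in> B" using A C by (auto simp: acts_at_atoms_def)
  have "P (A \<inter> C) f z = (if \<phi> z \<in> A \<inter> C then f z else 0)" if f: "f \<in> L2 M" and z: "atom M z" for f z
  proof -
    have "P (A \<inter> C) f z = P A (P C f) z"
      using AE_atomD[OF projection_Int[OF AB CB f, unfolded aeq_def] z] .
    also have "\<dots> = (if \<phi> z \<in> A \<inter> C then f z else 0)"
      using A C projection_L2[OF CB f] f z by (simp add: acts_at_atoms_def)
    finally show ?thesis .
  qed
  moreover have "A \<inter> C \<in> B" using paths.Int[OF AB CB] .
  ultimately show ?thesis by (simp add: acts_at_atoms_def)
qed

lemma acts_at_atoms_disjoint_UN:
  assumes E: "\<And>i::nat. acts_at_atoms (E i)" and disj: "disjoint_family E"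
  shows "acts_at_atoms (\<Union>i. E i)"
proof -
  have EB: "range E \<subseteq> B" using E by (auto simp: acts_at_atoms_def)
  have "P (\<Union>i. E i) f z = (if \<phi> z \<in> (\<Union>i. E i) then f z else 0)" if f: "f \<in> L2 M" and z: "atom M z" for f z
  proof -
    have L: "(\<lambda>n. \<Sum>i<n. P (E i) f z) \<longlonglongrightarrow> P (\<Union>i. E i) f z"
      by (rule projection_sums_at_atom[OF EB disj f z])
    have e: "P (E i) f z = (if \<phi> z \<in> E i then f z else 0)" for i
      using E[of i] f z by (simp add: acts_at_atoms_def)
    show ?thesis
    proof (cases "\<exists>j. \<phi> z \<in> E j")
      case True
      then obtain j where j: "\<phi> z \<in> E j" by blast
      have "\<phi> z \<notin> E i" if "i \<noteq> j" for i using disj j that by (auto simp: disjoint_family_on_def)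
      then have "(\<Sum>i<n + Suc j. P (E i) f z) = (\<Sum>i<n + Suc j. if i = j then f z else 0)" for n
        using e j by (intro sum.cong refl) auto
      then have "(\<Sum>i<n + Suc j. P (E i) f z) = f z" for n by simp
      moreover have "(\<lambda>n. \<Sum>i<n + Suc j. P (E i) f z) \<longlonglongrightarrow> P (\<Union>i. E i) f z"
        using LIMSEQ_ignore_initial_segment[OF L] .
      ultimately have "P (\<Union>i. E i) f z = f z" by (simp add: LIMSEQ_const_iff)
      then show ?thesis using j by auto
    next
      case False
      then show ?thesis using L e by (simp add: LIMSEQ_const_iff)
    qed
  qed
  moreover have "(\<Union>i. E i) \<in> B" using EB paths.countable_UN by blast
  ultimately show ?thesis by (simp add: acts_at_atoms_def)
qed

lemma acts_at_atoms_cylinder: assumes l: "l \<in> mor G" shows "acts_at_atoms (cylinder k G l)"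
proof -
  have "P (cylinder k G l) f z = (if \<phi> z \<in> cylinder k G l then f z else 0)"
    if f: "f \<in> L2 M" and z: "atom M z" for f z
    using AE_atomD[OF projection_cylinder[rule_format, OF l f, unfolded aeq_def] z]
      Sop_adj_at_atom[OF l f z] phi_in_cylinder_iff[OF z l] by simp
  then show ?thesis using cylinder_in_paths_borel[OF l] by (simp add: acts_at_atoms_def)
qed

lemma sigma_algebra_acts_at_atoms: "sigma_algebra S {E. acts_at_atoms E}"
  unfolding sigma_algebra_disjoint_iff algebra_iff_Int
proof (intro conjI ballI allI impI)
  show "{E. acts_at_atoms E} \<subseteq> Pow S" using paths.sets_into_space by (auto simp: acts_at_atoms_def)
next
  fix A :: "nat \<Rightarrow> _" assume "range A \<subseteq> {E. acts_at_atoms E}" "disjoint_family A"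
  then show "(\<Union>i. A i) \<in> {E. acts_at_atoms E}" using acts_at_atoms_disjoint_UN by blast
qed (use acts_at_atoms_empty acts_at_atoms_Compl acts_at_atoms_Int in auto)

lemma projection_at_atom:
  assumes E: "E \<in> B" and f: "f \<in> L2 M" and z: "atom M z"
  shows "P E f z = (if \<phi> z \<in> E then f z else 0)"
proof -
  have "B \<subseteq> {E. acts_at_atoms E}"
    unfolding paths_borel_def
    by (rule sigma_algebra.sigma_sets_subset[OF sigma_algebra_acts_at_atoms]) (auto intro: acts_at_atoms_cylinder)
  then show ?thesis using E f z by (auto simp: acts_at_atoms_def)
qed

end

section \<open>Irreducibility forces the atomic orbit to be conull\<close>

definition L2_supported :: "'x measure \<Rightarrow> 'x set \<Rightarrow> ('x \<Rightarrow> complex) set" where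
  "L2_supported M A = {f \<in> L2 M. AE x in M. x \<notin> A \<longrightarrow> f x = 0}"

lemma L2_supported_limit:
  assumes A: "A \<in> sets M" and F: "\<And>n. F n \<in> L2_supported M A" and f: "f \<in> L2 M"
    and lim: "(\<lambda>n. nrm M (\<lambda>x. F n x - f x)) \<longlonglongrightarrow> 0"
  shows "f \<in> L2_supported M A"
proof -
  let ?N = "space M - A"
  have N: "?N \<in> sets M" using A by auto
  have [measurable]: "f \<in> borel_measurable M" using L2_measurable[OF f] .
  have i1: "integrable M (\<lambda>x. indicator ?N x *\<^sub>R (cmod (f x))\<^sup>2)"
    using integrable_mult_indicator[OF N L2_integrable[OF f]] .
  have le: "(LINT x|M. indicator ?N x *\<^sub>R (cmod (f x))\<^sup>2) \<le> (nrm M (\<lambda>x. F n x - f x))\<^sup>2" for n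
  proof -
    have Fn: "F n \<in> L2 M" "AE x in M. x \<notin> A \<longrightarrow> F n x = 0" using F[of n] by (auto simp: L2_supported_def)
    have d: "(\<lambda>x. F n x - f x) \<in> L2 M" using L2_diff[OF Fn(1) f] .
    have "(LINT x|M. indicator ?N x *\<^sub>R (cmod (f x))\<^sup>2) \<le> (LINT x|M. (cmod (F n x - f x))\<^sup>2)"
      using Fn(2)
      by (intro integral_mono_AE[OF i1 L2_integrable[OF d]], eventually_elim)
         (auto simp: norm_minus_commute split: split_indicator)
    also have "\<dots> = (nrm M (\<lambda>x. F n x - f x))\<^sup>2"
      unfolding nrm_def by (simp add: integral_nonneg_AE)
    finally show ?thesis .
  qed
  have lim2: "(\<lambda>n. (nrm M (\<lambda>x. F n x - f x))\<^sup>2) \<longlonglongrightarrow> 0" using tendsto_power[OF lim, of 2] by simp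
  have "(LINT x|M. indicator ?N x *\<^sub>R (cmod (f x))\<^sup>2) \<le> 0"
    by (rule tendsto_le[OF trivial_limit_sequentially lim2 tendsto_const]) (use le in simp)
  moreover have "0 \<le> (LINT x|M. indicator ?N x *\<^sub>R (cmod (f x))\<^sup>2)"
    by (rule Bochner_Integration.integral_nonneg) auto
  ultimately have "(LINT x|M. indicator ?N x *\<^sub>R (cmod (f x))\<^sup>2) = 0" by (rule antisym)
  then have "AE x in M. indicator ?N x *\<^sub>R (cmod (f x))\<^sup>2 = 0"
    using integral_nonneg_eq_0_iff_AE[OF i1] by simp
  then have "AE x in M. x \<notin> A \<longrightarrow> f x = 0"
    by (rule AE_mp) (auto intro!: AE_I2 split: split_indicator)
  then show ?thesis using f by (simp add: L2_supported_def)
qed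

lemma closed_subspace_L2_supported: assumes A: "A \<in> sets M" shows "closed_subspace M (L2_supported M A)"
  unfolding closed_subspace_def
proof (intro conjI ballI allI impI)
  fix f g assume f: "f \<in> L2_supported M A" and g: "g \<in> L2_supported M A"
  then have "AE x in M. x \<notin> A \<longrightarrow> f x = 0" "AE x in M. x \<notin> A \<longrightarrow> g x = 0"
    by (auto simp: L2_supported_def)
  then have "AE x in M. x \<notin> A \<longrightarrow> f x + g x = 0" by eventually_elim auto
  then show "(\<lambda>x. f x + g x) \<in> L2_supported M A" using f g by (auto simp: L2_supported_def L2_add)
next
  fix c f assume f: "f \<in> L2_supported M A"
  then have "AE x in M. x \<notin> A \<longrightarrow> f x = 0" by (simp add: L2_supported_def)
  then have "AE x in M. x \<notin> A \<longrightarrow> c * f x = 0" by eventually_elim auto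
  then show "(\<lambda>x. c * f x) \<in> L2_supported M A" using f by (simp add: L2_supported_def L2_mult)
next
  fix f g assume "f \<in> L2_supported M A" and g: "g \<in> L2 M" and "aeq M f g"
  then have "AE x in M. x \<notin> A \<longrightarrow> f x = 0" "AE x in M. f x = g x"
    by (auto simp: L2_supported_def aeq_def)
  then have "AE x in M. x \<notin> A \<longrightarrow> g x = 0" by eventually_elim auto
  then show "g \<in> L2_supported M A" using g by (simp add: L2_supported_def)
next
  fix F f assume "(\<forall>n. F n \<in> L2_supported M A) \<and> f \<in> L2 M \<and> (\<lambda>n. nrm M (\<lambda>x. F n x - f x)) \<longlonglongrightarrow> 0"
  then show "f \<in> L2_supported M A" using L2_supported_limit[OF A] by blast
qed (auto simp: L2_supported_def L2_zero)

lemma orthc_L2_supported_vanishes: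
  assumes g: "g \<in> orthc M (L2_supported M A)" and z: "z \<in> A"
    and z_point: "{z} \<in> sets M" "emeasure M {z} < \<infinity>" "0 < measure M {z}"
  shows "g z = 0"
proof -
  have "(\<lambda>x. complex_of_real (indicator {z} x)) \<in> L2_supported M A"
    using L2_indicator[OF z_point(1,2)] z by (auto simp: L2_supported_def split: split_indicator)
  then have "ip M (\<lambda>x. complex_of_real (indicator {z} x)) g = 0" using g by (simp add: orthc_def)
  moreover have "ip M (\<lambda>x. complex_of_real (indicator {z} x)) g = measure M {z} *\<^sub>R cnj (g z)"
    using ip_indicator_singleton[OF z_point(1,2), of 1 g] by simp
  ultimately have "measure M {z} *\<^sub>R cnj (g z) = 0" by simp
  then show ?thesis using z_point(3) by simp
qed

locale irreducible_atomic_lambda_sbfs = atomic_lambda_sbfs +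
  assumes irreducible: "irreducible_ops M (Sl ` mor G)"
begin

abbreviation "L2_orbit \<equiv> L2_supported M atomic_orbit"

lemma indicator_atom_in_L2_orbit: "z \<in> atomic_orbit \<Longrightarrow> (\<lambda>x. complex_of_real (indicator {z} x)) \<in> L2_orbit"
  using L2_indicator atom_point[OF atom_of_atomic_orbit]
  by (auto simp: L2_supported_def split: split_indicator)

text \<open>Off O, \<open>S\<^sub>\<lambda>f\<close> can be nonzero only on \<open>\<tau>\<^sub>\<lambda>(N)\<close>, where N is the null set off O on
  which f is nonzero, because O is closed under \<open>\<tau>\<^sub>\<lambda>\<close>.\<close>

lemma Sop_L2_orbit: assumes l: "l \<in> mor G" and f: "f \<in> L2_orbit" shows "Sl l f \<in> L2_orbit"
proof -
  have fL: "f \<in> L2 M" and fa: "AE x in M. x \<notin> atomic_orbit \<longrightarrow> f x = 0"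
    using f by (auto simp: L2_supported_def)
  obtain N where N: "{x \<in> space M. \<not> (x \<notin> atomic_orbit \<longrightarrow> f x = 0)} \<subseteq> N"
    "emeasure M N = 0" "N \<in> sets M"
    using fa by (rule AE_E)
  let ?I = "N \<inter> D l"
  have I: "?I \<in> sets M" using N(3) D_sets[OF l] by blast
  have "N \<in> null_sets M" using N(2,3) by auto
  then have "?I \<in> null_sets M" using I by (rule null_sets_subset) simp
  then have "AE x in M. x \<notin> \<tau> l ` ?I"
    using AE_iff_null_sets[OF prefix_image_sets[OF l I]] prefix_image_null_sets[OF l] by blast
  then have "AE x in M. x \<notin> atomic_orbit \<longrightarrow> Sl l f x = 0"
  proof eventually_elim
    fix x assume x: "x \<notin> \<tau> l ` ?I"
    show "x \<notin> atomic_orbit \<longrightarrow> Sl l f x = 0"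
    proof (intro impI)
      assume "x \<notin> atomic_orbit"
      show "Sl l f x = 0"
      proof (cases "x \<in> R l")
        case True
        let ?w = "tc (dg G l) x"
        have w: "?w \<in> D l" "\<tau> l ?w = x" using R_iff[OF l, THEN iffD1, OF True] by auto
        have "?w \<notin> atomic_orbit"
        proof
          assume "?w \<in> atomic_orbit"
          then have "\<tau> l ?w \<in> atomic_orbit" by (rule atomic_orbit_prefix[OF _ l w(1)])
          then show False using w(2) \<open>x \<notin> atomic_orbit\<close> by simp
        qed
        moreover have "?w \<notin> N"
        proof
          assume "?w \<in> N"
          then have "?w \<in> ?I" using w(1) by (rule IntI)
          then have "\<tau> l ?w \<in> \<tau> l ` ?I" by (rule imageI)
          then show False using x w(2) by simp
        qed
        moreover have "?w \<in> space M" by (rule subsetD[OF D_subset_space[OF l] w(1)])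
        ultimately have "f ?w = 0" using N(1) by auto
        then show ?thesis by (simp add: Sop_def)
      qed (simp add: Sop_def)
    qed
  qed
  then show ?thesis using Sop_L2[OF l fL] by (simp add: L2_supported_def)
qed

lemma Sop_orthc_L2_orbit: assumes l: "l \<in> mor G" and g: "g \<in> orthc M L2_orbit" shows "Sl l g \<in> orthc M L2_orbit"
proof -
  have gL: "g \<in> L2 M" using g by (simp add: orthc_def)
  have "ip M f (Sl l g) = 0" if f: "f \<in> L2_orbit" for f
  proof -
    have "AE x in M. x \<notin> atomic_orbit \<longrightarrow> f x = 0" using f by (simp add: L2_supported_def)
    then have "AE x in M. f x * cnj (Sl l g x) = 0"
    proof eventually_elim
      fix x assume x: "x \<notin> atomic_orbit \<longrightarrow> f x = 0"
      have "Sl l g x = 0" if "x \<in> atomic_orbit"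
      proof (cases "x \<in> R l")
        case True
        have w: "tc (dg G l) x \<in> atomic_orbit" using atomic_orbit_coding[OF that l True] .
        have "g (tc (dg G l) x) = 0"
          using orthc_L2_supported_vanishes[OF g w] atom_point[OF atom_of_atomic_orbit[OF w]] by simp
        then show ?thesis by (simp add: Sop_def)
      qed (simp add: Sop_def)
      then show "f x * cnj (Sl l g x) = 0" using x by auto
    qed
    then show ?thesis unfolding ip_def by (rule integral_eq_zero_AE)
  qed
  then show ?thesis using Sop_L2[OF l gL] by (simp add: orthc_def)
qed

lemma L2_subset_L2_orbit: "L2 M \<subseteq> L2_orbit"
proof -
  have "closed_subspace M L2_orbit \<and> (\<forall>T\<in>Sl ` mor G. \<forall>f\<in>L2_orbit. T f \<in> L2_orbit) \<and>
        (\<forall>T\<in>Sl ` mor G. \<forall>g\<in>orthc M L2_orbit. T g \<in> orthc M L2_orbit) \<longrightarrow>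
        (\<forall>f\<in>L2_orbit. aeq M f (\<lambda>_. 0)) \<or> L2 M \<subseteq> L2_orbit"
    using irreducible unfolding irreducible_ops_def by (rule spec)
  moreover have "closed_subspace M L2_orbit" using closed_subspace_L2_supported[OF countable_sets_atomic_orbit] by simp
  moreover have "\<forall>T\<in>Sl ` mor G. \<forall>f\<in>L2_orbit. T f \<in> L2_orbit" using Sop_L2_orbit by blast
  moreover have "\<forall>T\<in>Sl ` mor G. \<forall>g\<in>orthc M L2_orbit. T g \<in> orthc M L2_orbit" using Sop_orthc_L2_orbit by blast
  ultimately have "(\<forall>f\<in>L2_orbit. aeq M f (\<lambda>_. 0)) \<or> L2 M \<subseteq> L2_orbit" by blast
  moreover have "\<not> aeq M (\<lambda>x. complex_of_real (indicator {y} x)) (\<lambda>_. 0)"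
  proof
    assume "aeq M (\<lambda>x. complex_of_real (indicator {y} x)) (\<lambda>_. 0)"
    then have "complex_of_real (indicator {y} y) = 0" unfolding aeq_def by (rule AE_atomD[OF _ atom_y])
    then show False by simp
  qed
  ultimately show ?thesis using indicator_atom_in_L2_orbit[OF y_in_atomic_orbit] by blast
qed

text \<open>Each \<open>\<chi>\<^bsub>R\<^sub>\<lambda> - O\<^esub>\<close> lies in \<open>L\<^sup>2\<close>, hence vanishes a.e. off the orbit O, and the
  ranges \<open>R\<^sub>\<lambda>\<close> of degree 0 cover X up to a null set.\<close>

lemma AE_in_atomic_orbit: "AE x in M. x \<in> atomic_orbit"
proof -
  let ?L0 = "{l \<in> mor G. dg G l = dzero}"
  have cL0: "countable ?L0" using countable_subset[OF _ countable_mor] by auto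
  let ?U = "\<Union>l\<in>?L0. R l"
  have Us: "?U \<in> sets M" by (rule sets.countable_UN''[OF cL0]) auto
  have "AE x in M. x \<in> ?U"
    using emeasure_uncovered[OF NK_dzero] Us by (subst AE_iff_measurable[of "space M - ?U"]) auto
  moreover have "AE x in M. \<forall>l\<in>?L0. x \<in> R l \<longrightarrow> x \<in> atomic_orbit"
  proof (rule AE_ball_countable'[OF _ cL0])
    fix l assume "l \<in> ?L0"
    then have l: "l \<in> mor G" by simp
    have s: "R l - atomic_orbit \<in> sets M"
      using R_sets[OF l] countable_sets_atomic_orbit[OF order_refl] by (rule sets.Diff)
    have "emeasure M (R l - atomic_orbit) < \<infinity>"
      by (rule le_less_trans[OF emeasure_mono emeasure_R_finite[OF l]]) (use l in auto)
    then have "(\<lambda>x. complex_of_real (indicator (R l - atomic_orbit) x)) \<in> L2_orbit"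
      using L2_subset_L2_orbit L2_indicator[OF s] by blast
    then have "AE x in M. x \<notin> atomic_orbit \<longrightarrow> complex_of_real (indicator (R l - atomic_orbit) x) = 0"
      by (simp add: L2_supported_def)
    then show "AE x in M. x \<in> R l \<longrightarrow> x \<in> atomic_orbit"
      by (rule AE_mp) (auto intro!: AE_I2 split: split_indicator)
  qed
  ultimately show ?thesis by (rule AE_mp[OF _ AE_mp]) (auto intro!: AE_I2)
qed

end

section \<open>Pure atomicity\<close>

lemma tendsto_integral_indicator_vanishing:
  fixes g :: "'x \<Rightarrow> real"
  assumes g: "integrable M g" and K: "\<And>n. K n \<in> sets M"
    and vanishing: "\<And>x. \<forall>\<^sub>F n in sequentially. x \<notin> K n"
  shows "(\<lambda>n. LINT x|M. indicator (K n) x * g x) \<longlonglongrightarrow> 0"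
proof -
  have [measurable]: "g \<in> borel_measurable M" using g by auto
  have "(\<lambda>n. LINT x|M. indicator (K n) x *\<^sub>R g x) \<longlonglongrightarrow> (LINT x|M. 0)"
  proof (rule integral_dominated_convergence[where w = "\<lambda>x. norm (g x)"])
    show "(\<lambda>x. indicator (K n) x *\<^sub>R g x) \<in> borel_measurable M" for n using K[of n] by measurable
    show "AE x in M. (\<lambda>n. indicator (K n) x *\<^sub>R g x) \<longlonglongrightarrow> 0"
    proof (intro AE_I2 tendsto_eventually)
      fix x show "\<forall>\<^sub>F n in sequentially. indicator (K n) x *\<^sub>R g x = 0"
        using vanishing[of x] by eventually_elim simp
    qed
    show "AE x in M. norm (indicator (K n) x *\<^sub>R g x) \<le> norm (g x)" for n
      by (intro AE_I2) (auto split: split_indicator)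
  qed (use g in auto)
  then show ?thesis by simp
qed

lemma (in atomic_lambda_sbfs) integral_tail_atomic_orbit:
  assumes g: "integrable M (g :: _ \<Rightarrow> real)" and e: "0 < \<epsilon>"
  shows "\<exists>F. finite F \<and> F \<subseteq> atomic_orbit \<and> (LINT x|M. indicator (atomic_orbit - F) x * g x) < \<epsilon>"
proof -
  let ?e = "from_nat_into atomic_orbit"
  let ?K = "\<lambda>n. atomic_orbit - ?e ` {..<n}"
  have range_e: "range ?e = atomic_orbit"
    using y_in_atomic_orbit countable_atomic_orbit by (intro range_from_nat_into) auto
  have K: "?K n \<in> sets M" for n by (rule countable_sets_atomic_orbit) auto
  have vanishing: "\<forall>\<^sub>F n in sequentially. x \<notin> ?K n" for x
  proof (cases "x \<in> atomic_orbit")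
    case True
    then obtain j where "x = ?e j" using range_e by (metis rangeE)
    then show ?thesis by (auto simp: eventually_sequentially intro!: exI[of _ "Suc j"])
  qed simp
  have "(\<lambda>n. LINT x|M. indicator (?K n) x * g x) \<longlonglongrightarrow> 0"
    by (rule tendsto_integral_indicator_vanishing[OF g K vanishing])
  then have "\<forall>\<^sub>F n in sequentially. (LINT x|M. indicator (?K n) x * g x) < \<epsilon>"
    using e by (rule order_tendstoD(2))
  then obtain N where "(LINT x|M. indicator (?K N) x * g x) < \<epsilon>"
    by (auto simp: eventually_sequentially)
  moreover have "?e ` {..<N} \<subseteq> atomic_orbit" using range_e by auto
  ultimately show ?thesis by (intro exI[of _ "?e ` {..<N}"]) auto
qed

locale irreducible_sbfs_pvm = sbfs_pvm + irreducible_atomic_lambda_sbfs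
begin

lemma zero_op_projection:
  assumes E: "E \<in> B" and disj: "\<And>z. z \<in> atomic_orbit \<Longrightarrow> \<phi> z \<notin> E"
  shows "zero_op M (P E)"
  unfolding zero_op_def aeq_def
proof
  fix f assume f: "f \<in> L2 M"
  show "AE x in M. P E f x = 0"
    using AE_in_atomic_orbit
    by eventually_elim (simp add: projection_at_atom[OF E f atom_of_atomic_orbit] disj)
qed

lemma zero_op_projection_off_orbit: "zero_op M (P (S - orbit k G (\<phi> y)))"
  using phi_atomic_orbit
  by (intro zero_op_projection paths.compl_sets orbit_in_paths_borel) auto

lemma nonzero_projection_singleton:
  assumes z: "z \<in> atomic_orbit" shows "\<not> zero_op M (P {\<phi> z})"
proof
  assume zero: "zero_op M (P {\<phi> z})"
  let ?f = "\<lambda>x. complex_of_real (indicator {z} x)"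
  have za: "atom M z" using atom_of_atomic_orbit[OF z] .
  have fL: "?f \<in> L2 M" using L2_indicator atom_point[OF za] by blast
  have B: "{\<phi> z} \<in> B" using singleton_in_paths_borel[OF phi_in_paths[OF za]] .
  have "P {\<phi> z} ?f z = 0" using AE_atomD[OF zero[unfolded zero_op_def aeq_def, rule_format, OF fL] za] .
  moreover have "P {\<phi> z} ?f z = 1" using projection_at_atom[OF B fL za] by simp
  ultimately show False by simp
qed

lemma nrm_diff_projection_sum:
  assumes f: "f \<in> L2 M" and H: "finite H" "H \<subseteq> \<phi> ` atomic_orbit"
  shows "nrm M (\<lambda>x. f x - (\<Sum>\<omega>\<in>H. P {\<omega>} f x)) =
         sqrt (LINT x|M. indicator {z \<in> atomic_orbit. \<phi> z \<notin> H} x * (cmod (f x))\<^sup>2)"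
proof -
  have HB: "{\<omega>} \<in> B" if "\<omega> \<in> H" for \<omega>
    using that H(2) singleton_in_paths_borel phi_in_paths atom_of_atomic_orbit by blast
  have [measurable]: "f \<in> borel_measurable M" using L2_measurable[OF f] .
  have [measurable]: "(\<lambda>x. \<Sum>\<omega>\<in>H. P {\<omega>} f x) \<in> borel_measurable M"
    using HB f by (intro L2_measurable L2_sum[OF H(1)] projection_L2)
  have [measurable]: "{z \<in> atomic_orbit. \<phi> z \<notin> H} \<in> sets M" by (rule countable_sets_atomic_orbit) auto
  have ae: "AE x in M. (cmod (f x - (\<Sum>\<omega>\<in>H. P {\<omega>} f x)))\<^sup>2 =
                        indicator {z \<in> atomic_orbit. \<phi> z \<notin> H} x * (cmod (f x))\<^sup>2"
    using AE_in_atomic_orbit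
  proof eventually_elim
    fix x assume x: "x \<in> atomic_orbit"
    have "(\<Sum>\<omega>\<in>H. P {\<omega>} f x) = (\<Sum>\<omega>\<in>H. if \<phi> x = \<omega> then f x else 0)"
      using projection_at_atom[OF HB f atom_of_atomic_orbit[OF x]] by (intro sum.cong) auto
    also have "\<dots> = (if \<phi> x \<in> H then f x else 0)" using H(1) by simp
    finally show "(cmod (f x - (\<Sum>\<omega>\<in>H. P {\<omega>} f x)))\<^sup>2 =
                  indicator {z \<in> atomic_orbit. \<phi> z \<notin> H} x * (cmod (f x))\<^sup>2"
      using x by (simp split: split_indicator)
  qed
  have "(LINT x|M. (cmod (f x - (\<Sum>\<omega>\<in>H. P {\<omega>} f x)))\<^sup>2) =
        (LINT x|M. indicator {z \<in> atomic_orbit. \<phi> z \<notin> H} x * (cmod (f x))\<^sup>2)"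
    by (rule integral_cong_AE[OF _ _ ae]) measurable
  then show ?thesis unfolding nrm_def by simp
qed

lemma projection_sums_approximate:
  assumes f: "f \<in> L2 M" and e: "0 < \<epsilon>"
  shows "\<exists>F. finite F \<and> F \<subseteq> \<phi> ` atomic_orbit \<and>
           (\<forall>H. finite H \<and> F \<subseteq> H \<and> H \<subseteq> \<phi> ` atomic_orbit \<longrightarrow>
              nrm M (\<lambda>x. f x - (\<Sum>\<omega>\<in>H. P {\<omega>} f x)) < \<epsilon>)"
proof -
  obtain F where F: "finite F" "F \<subseteq> atomic_orbit"
    and tail: "(LINT x|M. indicator (atomic_orbit - F) x * (cmod (f x))\<^sup>2) < \<epsilon>\<^sup>2"
    using integral_tail_atomic_orbit[OF L2_integrable[OF f]] e by (metis zero_less_power)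
  have "nrm M (\<lambda>x. f x - (\<Sum>\<omega>\<in>H. P {\<omega>} f x)) < \<epsilon>"
    if H: "finite H" "\<phi> ` F \<subseteq> H" "H \<subseteq> \<phi> ` atomic_orbit" for H
  proof -
    let ?J = "{z \<in> atomic_orbit. \<phi> z \<notin> H}"
    have sets: "?J \<in> sets M" "atomic_orbit - F \<in> sets M" by (auto intro: countable_sets_atomic_orbit)
    have "?J \<subseteq> atomic_orbit - F" using H(2) by auto
    then have "indicator ?J x * (cmod (f x))\<^sup>2 \<le> indicator (atomic_orbit - F) x * (cmod (f x))\<^sup>2" for x
      by (simp split: split_indicator) blast
    then have "(LINT x|M. indicator ?J x * (cmod (f x))\<^sup>2) \<le>
               (LINT x|M. indicator (atomic_orbit - F) x * (cmod (f x))\<^sup>2)"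
      using integrable_mult_indicator[OF sets(1) L2_integrable[OF f]]
        integrable_mult_indicator[OF sets(2) L2_integrable[OF f]]
      by (intro integral_mono) simp_all
    then have "sqrt (LINT x|M. indicator ?J x * (cmod (f x))\<^sup>2) < sqrt (\<epsilon>\<^sup>2)"
      using tail by (intro real_sqrt_less_mono) simp
    then show ?thesis using nrm_diff_projection_sum[OF f H(1,3)] e by simp
  qed
  moreover have "finite (\<phi> ` F)" "\<phi> ` F \<subseteq> \<phi> ` atomic_orbit" using F by auto
  ultimately show ?thesis by (intro exI[of _ "\<phi> ` F"]) auto
qed

lemma purely_atomic: "purely_atomic M S B P"
  unfolding purely_atomic_def
proof (rule exI[of _ "\<phi> ` atomic_orbit"], intro conjI ballI allI impI)
  show Om: "\<phi> ` atomic_orbit \<subseteq> S" using phi_in_paths atom_of_atomic_orbit by blast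
  show OmB: "\<phi> ` atomic_orbit \<in> B" using countable_atomic_orbit Om by (intro countable_in_paths_borel) auto
  show "zero_op M (P (S - \<phi> ` atomic_orbit))" using OmB by (intro zero_op_projection paths.compl_sets) auto
  fix \<omega> assume "\<omega> \<in> \<phi> ` atomic_orbit"
  then show "{\<omega>} \<in> B" "\<not> zero_op M (P {\<omega>})"
    using singleton_in_paths_borel Om nonzero_projection_singleton by auto
qed (rule projection_sums_approximate)

end

theorem theorem5p2:
  fixes k :: nat and G :: "'a kgraph" and M :: "'x measure"
    and D :: "'a \<Rightarrow> 'x set" and \<tau> :: "'a \<Rightarrow> 'x \<Rightarrow> 'x"
    and tc :: "deg \<Rightarrow> 'x \<Rightarrow> 'x" and \<Phi> :: "'a \<Rightarrow> 'x \<Rightarrow> real" and y :: 'x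
  assumes "1 \<le> k"
    and "k_graph k G"
    and "row_finite_source_free k G"
    and "lambda_sbfs k G M D \<tau> tc \<Phi>"
    and "irreducible_ops M (Sop G D \<tau> tc \<Phi> ` mor G)"
    and "y \<in> space M" and "{y} \<in> sets M" and "0 < emeasure M {y}"
    and "is_pvm M (inf_paths k G) (paths_borel k G) P"
    and "\<forall>l\<in>mor G. \<forall>f\<in>L2 M. aeq M (P (cylinder k G l) f)
            (Sop G D \<tau> tc \<Phi> l (adj M (Sop G D \<tau> tc \<Phi> l) f))"
  shows "purely_atomic M (inf_paths k G) (paths_borel k G) P \<and>
         zero_op M (P (inf_paths k G - orbit k G (phi k G D \<tau> y)))"
proof -
  interpret irreducible_sbfs_pvm k G M D \<tau> tc \<Phi> P y
    using assms(2,4,5,6-10) by unfold_locales (simp_all add: atom_def)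
  show ?thesis using purely_atomic zero_op_projection_off_orbit by simp
qed

end
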